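(* Assume $x(0)=x'(0)=0$ and additionally $p'(t)\to0$ as $t\to\infty$. Suppose $y_2(t)=o(1/A(t))$ and that there are constants $c_1,c_2$ with \[ x(t)=\frac{c_1\cos(\omega t)+c_2\sin(\omega t)}{A(t)}+o\Big(\frac1{A(t)}\Big)\quad(t\to\infty). \] Then the limits $\lim_{T\to\infty}\int_0^TA(t)\sin(\omega t)y_2(t)\,dt$ and $\lim_{T\to\infty}\int_0^TA(t)\cos(\omega t)y_2(t)\,dt$ exist and are finite.
   Context: Standing assumptions: $\omega>0$ is a constant; $p\in C^1([0,\infty))$ with $p(t)>0$ and $p'(t)<0$ for all $t\ge0$, $\int_0^\infty p(t)\,dt=\infty$ and $\int_0^\infty p(t)^2\,dt<\infty$; $f\in L^1_{\mathrm{loc}}([0,\infty))$. $x$ denotes the solution of $x''(t)+p(t)x'(t)+\omega^2x(t)=f(t)$, $t\ge0$. Notation: $A(t)=\exp(\frac12\int_0^tp(s)\,ds)$; $y_1(t)=\int_0^te^{-\omega^2(t-s)}f(s)\,ds$; $y_2(t)=\int_0^te^{-\omega^2(t-s)}y_1(s)\,ds=\int_0^t(t-s)e^{-\omega^2(t-s)}f(s)\,ds$. *)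

theory Defs
  imports "HOL-Analysis.Analysis" "HOL-Library.Landau_Symbols"
begin

definition Afun :: "(real \<Rightarrow> real) \<Rightarrow> real \<Rightarrow> real" where
  "Afun p t = exp ((1/2) * integral {0..t} p)"

definition y1fun :: "real \<Rightarrow> (real \<Rightarrow> real) \<Rightarrow> real \<Rightarrow> real" where
  "y1fun \<omega> f t = integral {0..t} (\<lambda>s. exp (-(\<omega>^2) * (t - s)) * f s)"

definition y2fun :: "real \<Rightarrow> (real \<Rightarrow> real) \<Rightarrow> real \<Rightarrow> real" where
  "y2fun \<omega> f t = integral {0..t} (\<lambda>s. exp (-(\<omega>^2) * (t - s)) * y1fun \<omega> f s)"

end

theory Submission
  imports Defs
begin

text \<open>Put \<open>k = \<omega>\<^sup>2 - p/2\<close> and let \<open>res v\<close> be the solution of \<open>Z' = v - k Z\<close>, \<open>Z 0 = 0\<close>.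
  As \<open>p\<close> decreases and is square integrable, \<open>p \<rightarrow> 0\<close> and \<open>k \<rightarrow> \<omega>\<^sup>2 > 0\<close>, so \<open>res\<close> preserves
  boundedness, decay to \<open>0\<close>, integrability on \<open>[0,\<infinity>)\<close>, and asymptotic agreement with
  trigonometric polynomials of frequency \<open>\<omega>\<close>. With \<open>u = A x\<close>, \<open>V\<^sub>1 = res u\<close> and \<open>V\<^sub>2 = res V\<^sub>1\<close>,
  an integration by parts in \<open>y\<^sub>1\<close> followed by the product rule for \<open>p \<cdot> res v\<close> gives
  \<open>A y\<^sub>2 = u - 2 k V\<^sub>1 + (k\<^sup>2 + \<omega>\<^sup>2 + p'/2) V\<^sub>2 - \<Xi>\<close>, where \<open>\<Xi>\<close> is built from \<open>p'\<close>, \<open>p\<^sup>2\<close> and \<open>res\<close>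
  applied to bounded functions and is therefore integrable. Multiplied by \<open>cos (\<omega> t)\<close>
  (resp. \<open>sin (\<omega> t)\<close>), the principal part is the derivative of \<open>cos (\<omega> t) (V\<^sub>1 - k V\<^sub>2) + \<omega> sin (\<omega> t) V\<^sub>2\<close>
  (resp. \<open>sin (\<omega> t) (V\<^sub>1 - k V\<^sub>2) - \<omega> cos (\<omega> t) V\<^sub>2\<close>), which converges because \<open>u\<close>, hence
  \<open>V\<^sub>1\<close> and \<open>V\<^sub>2\<close>, are asymptotically trigonometric.\<close>

section \<open>Calculus on the half-line\<close>

lemma at_within_Icc_eq_Ici:
  fixes t T :: real
  assumes "0 \<le> t" "t < T"
  shows "at t within {0..T} = at t within {0..}"
  by (rule at_within_nhd[of t "{..<T}"]) (use assms in auto)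

lemma has_real_derivative_integral_Ici:
  fixes g :: "real \<Rightarrow> real"
  assumes "continuous_on {0..} g" "0 \<le> t"
  shows "((\<lambda>t. integral {0..t} g) has_real_derivative g t) (at t within {0..})"
proof -
  have "continuous_on {0..t+1} g"
    using assms(1) by (rule continuous_on_subset) auto
  then have "((\<lambda>t. integral {0..t} g) has_real_derivative g t) (at t within {0..t+1})"
    by (rule integral_has_real_derivative) (use assms in auto)
  then show ?thesis
    using at_within_Icc_eq_Ici[of t "t+1"] assms by simp
qed

lemma continuous_on_Ici_if_Icc:
  fixes g :: "real \<Rightarrow> real"
  assumes "\<And>T. 0 \<le> T \<Longrightarrow> continuous_on {0..T} g"
  shows "continuous_on {0..} g"
  unfolding continuous_on_eq_continuous_within
proof
  fix t :: real
  assume t: "t \<in> {0..}"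
  have "continuous (at t within {0..t+1}) g"
    using assms[of "t+1"] t by (auto simp: continuous_on_eq_continuous_within)
  then show "continuous (at t within {0..}) g"
    using at_within_Icc_eq_Ici[of t "t+1"] t by simp
qed

lemma continuous_on_Ici_if_deriv:
  fixes g g' :: "real \<Rightarrow> real"
  assumes "\<And>t. 0 \<le> t \<Longrightarrow> (g has_real_derivative g' t) (at t within {0..})"
  shows "continuous_on {0..} g"
  unfolding continuous_on_eq_continuous_within
  using assms DERIV_continuous by (metis atLeast_iff)

lemma continuous_on_indefinite_integral_Ici:
  fixes g G :: "real \<Rightarrow> real"
  assumes "\<And>t. 0 \<le> t \<Longrightarrow> (g has_integral G t) {0..t}"
  shows "continuous_on {0..} G"
proof (rule continuous_on_Ici_if_Icc)
  fix T :: real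
  assume "0 \<le> T"
  then have "continuous_on {0..T} (\<lambda>t. integral {0..t} g)"
    using assms by (intro indefinite_integral_continuous_1) blast
  then show "continuous_on {0..T} G"
    by (rule continuous_on_eq) (use assms in \<open>auto simp: has_integral_integrable_integral\<close>)
qed

lemma integrable_on_Icc_if_continuous_Ici:
  fixes v :: "real \<Rightarrow> real"
  assumes "continuous_on {0..} v" "0 \<le> a"
  shows "v integrable_on {a..b}"
  by (rule integrable_continuous_interval, rule continuous_on_subset[OF assms(1)])
    (use assms in auto)

lemma has_integral_if_deriv_Ici:
  fixes G g :: "real \<Rightarrow> real"
  assumes G: "\<And>t. 0 \<le> t \<Longrightarrow> (G has_real_derivative g t) (at t within {0..})"
    and "0 \<le> a" "a \<le> b"
  shows "(g has_integral G b - G a) {a..b}"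
proof (rule fundamental_theorem_of_calculus[OF \<open>a \<le> b\<close>])
  fix t
  assume "t \<in> {a..b}"
  then have "(G has_real_derivative g t) (at t within {a..b})"
    using assms by (intro has_field_derivative_subset[OF G]) auto
  then show "(G has_vector_derivative g t) (at t within {a..b})"
    by (simp add: has_real_derivative_iff_has_vector_derivative)
qed

lemma constant_if_deriv_zero_Ici:
  fixes D :: "real \<Rightarrow> real"
  assumes "\<And>t. 0 \<le> t \<Longrightarrow> (D has_real_derivative 0) (at t within {0..})" "0 \<le> t"
  shows "D t = D 0"
  using has_integral_if_deriv_Ici[OF assms(1) order_refl assms(2)] by simp

lemma integral_Icc_mono_nonneg:
  fixes h :: "real \<Rightarrow> real"
  assumes "continuous_on {0..} h" "\<And>t. 0 \<le> t \<Longrightarrow> 0 \<le> h t" "0 \<le> s" "s \<le> t"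
  shows "integral {0..s} h \<le> integral {0..t} h"
proof -
  have "integral {0..s} h + integral {s..t} h = integral {0..t} h"
    using assms by (intro Henstock_Kurzweil_Integration.integral_combine
        integrable_on_Icc_if_continuous_Ici) auto
  moreover have "0 \<le> integral {s..t} h"
    using assms by (intro integral_nonneg integrable_on_Icc_if_continuous_Ici) auto
  ultimately show ?thesis
    by linarith
qed

lemma integral_ge_const_mult:
  fixes k :: "real \<Rightarrow> real"
  assumes "continuous_on {0..} k" "0 \<le> s" "s \<le> t" "\<And>r. r \<in> {s..t} \<Longrightarrow> L \<le> k r"
  shows "L * (t - s) \<le> integral {s..t} k"
proof -
  have "integral {s..t} (\<lambda>r. L) \<le> integral {s..t} k"
    using assms by (intro integral_le integrable_on_Icc_if_continuous_Ici) auto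
  then show ?thesis
    using assms by (simp add: mult.commute)
qed

lemma integral_ge_linear_minus_const:
  fixes k :: "real \<Rightarrow> real"
  assumes k: "continuous_on {0..} k" and c: "0 \<le> c" and t0: "0 \<le> t0" and m: "0 \<le> m"
    and low: "\<And>r. r \<in> {0..t0} \<Longrightarrow> - m \<le> k r" and high: "\<And>r. t0 \<le> r \<Longrightarrow> c \<le> k r"
    and st: "0 \<le> s" "s \<le> t"
  shows "c * (t - s) - (m + c) * t0 \<le> integral {s..t} k"
proof (cases "t \<le> t0")
  case True
  then have "- m * (t - s) \<le> integral {s..t} k"
    using low st by (intro integral_ge_const_mult[OF k]) auto
  moreover have "m * (t - s) \<le> m * t0" "c * (t - s) \<le> c * t0"
    using True st m c by (auto intro: mult_left_mono)
  ultimately show ?thesis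
    by (simp add: algebra_simps)
next
  case False
  show ?thesis
  proof (cases "t0 \<le> s")
    case True
    then have "c * (t - s) \<le> integral {s..t} k"
      using high st by (intro integral_ge_const_mult[OF k]) auto
    moreover have "0 \<le> (m + c) * t0"
      using m c t0 by simp
    ultimately show ?thesis
      by linarith
  next
    case s_lt: False
    have "integral {s..t0} k + integral {t0..t} k = integral {s..t} k"
      using False s_lt st
      by (intro Henstock_Kurzweil_Integration.integral_combine integrable_on_Icc_if_continuous_Ici k) auto
    moreover have "- m * (t0 - s) \<le> integral {s..t0} k"
      using low s_lt st by (intro integral_ge_const_mult[OF k]) auto
    moreover have "c * (t - t0) \<le> integral {t0..t} k"
      using high t0 False by (intro integral_ge_const_mult[OF k]) auto
    moreover have "m * (t0 - s) \<le> m * t0" "c * (t0 - s) \<le> c * t0"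
      using st m c by (auto intro: mult_left_mono)
    ultimately show ?thesis
      by (simp add: algebra_simps)
  qed
qed

lemma has_integral_exp_kernel:
  fixes a b c t :: real
  assumes "a \<le> b" "c > 0"
  shows "((\<lambda>s. exp (- c * (t - s))) has_integral (exp (- c * (t - b)) - exp (- c * (t - a))) / c) {a..b}"
proof -
  have "((\<lambda>s. exp (- c * (t - s))) has_integral exp (- c * (t - b)) / c - exp (- c * (t - a)) / c) {a..b}"
  proof (rule fundamental_theorem_of_calculus[OF assms(1)])
    fix s
    have "((\<lambda>s. exp (- c * (t - s)) / c) has_real_derivative exp (- c * (t - s)) * (- c * (0 - 1)) / c)
        (at s within {a..b})"
      using assms(2) by (intro derivative_eq_intros) auto
    then show "((\<lambda>s. exp (- c * (t - s)) / c) has_vector_derivative exp (- c * (t - s)))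
        (at s within {a..b})"
      using assms(2) by (simp add: has_real_derivative_iff_has_vector_derivative)
  qed
  then show ?thesis
    by (simp add: diff_divide_distrib)
qed

lemma tendsto_exp_neg_at_top:
  fixes c :: real
  assumes "c > 0"
  shows "((\<lambda>t. exp (- c * t)) \<longlongrightarrow> 0) at_top"
proof -
  have "filterlim (\<lambda>t. c * t) at_top at_top"
    using assms by (intro filterlim_tendsto_pos_mult_at_top[OF tendsto_const] filterlim_ident)
  then have "filterlim (\<lambda>t. - (c * t)) at_bot at_top"
    by (simp add: filterlim_uminus_at_bot)
  then show ?thesis
    by (auto intro: filterlim_compose[OF exp_at_bot])
qed

lemma tendsto_zero_mult_Bfun:
  fixes g h :: "'a \<Rightarrow> real"
  assumes "Bfun h F" "(g \<longlongrightarrow> 0) F"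
  shows "((\<lambda>t. h t * g t) \<longlongrightarrow> 0) F"
  using bounded_bilinear.Bfun_prod_Zfun[OF bounded_bilinear_mult assms(1)] assms(2)
  by (simp add: tendsto_Zfun_iff)

lemma tendsto_mono_bounded_at_top:
  fixes F :: "real \<Rightarrow> real"
  assumes mono: "\<And>s t. 0 \<le> s \<Longrightarrow> s \<le> t \<Longrightarrow> F s \<le> F t"
    and bdd: "\<And>t. 0 \<le> t \<Longrightarrow> F t \<le> B"
  shows "\<exists>L. (F \<longlongrightarrow> L) at_top"
proof -
  have bdd_F: "bdd_above (F ` {0..})"
    using bdd unfolding bdd_above_def by auto
  have "(F \<longlongrightarrow> Sup (F ` {0..})) at_top"
  proof (rule increasing_tendsto)
    show "\<forall>\<^sub>F t in at_top. F t \<le> Sup (F ` {0..})"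
      unfolding eventually_at_top_linorder by (intro exI[of _ 0] allI impI cSup_upper bdd_F) auto
    fix y
    assume "y < Sup (F ` {0..})"
    then obtain s where s: "0 \<le> s" "y < F s"
      using less_cSup_iff[of "F ` {0..}" y] bdd_F by auto
    then show "\<forall>\<^sub>F t in at_top. y < F t"
      unfolding eventually_at_top_linorder using mono by (intro exI[of _ s]) (fastforce intro: less_le_trans)
  qed
  then show ?thesis
    by blast
qed

lemma bounded_Ici_if_eventually_bounded:
  fixes g :: "real \<Rightarrow> real"
  assumes "continuous_on {0..} g" "\<forall>\<^sub>F t in at_top. \<bar>g t\<bar> \<le> B"
  shows "bounded (g ` {0..})"
proof -
  obtain N where N: "\<And>t. N \<le> t \<Longrightarrow> \<bar>g t\<bar> \<le> B"
    using assms(2) by (auto simp: eventually_at_top_linorder)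
  have "bounded (g ` {0..max N 0})"
    by (intro compact_imp_bounded compact_continuous_image continuous_on_subset[OF assms(1)]) auto
  moreover have "g ` {0..} \<subseteq> g ` {0..max N 0} \<union> cball 0 B"
  proof
    fix y
    assume "y \<in> g ` {0..}"
    then obtain t where "0 \<le> t" "y = g t"
      by auto
    then show "y \<in> g ` {0..max N 0} \<union> cball 0 B"
      using N[of t] by (cases "t \<le> max N 0") auto
  qed
  ultimately show ?thesis
    by (metis bounded_Un bounded_cball bounded_subset)
qed

lemma tendsto_zero_if_smallo_inverse:
  fixes g h a :: "real \<Rightarrow> real"
  assumes "(\<lambda>t. g t - h t / a t) \<in> o[F](\<lambda>t. 1 / a t)" "\<And>t. 0 < a t"
  shows "((\<lambda>t. a t * g t - h t) \<longlongrightarrow> 0) F"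
proof -
  have "(g t - h t / a t) / (1 / a t) = a t * g t - h t" for t
    using assms(2)[of t] by (simp add: field_simps)
  then show ?thesis
    using smalloD_tendsto[OF assms(1)] by simp
qed

section \<open>Continuous integrable functions on the half-line\<close>

text \<open>Integrability is expressed through bounded partial integrals of \<open>|h|\<close>, which is all that is
  needed for the convergence of \<open>\<integral>\<^sub>0\<^sup>T h\<close> and avoids improper integrals.\<close>

definition cont_L1 :: "(real \<Rightarrow> real) \<Rightarrow> bool" where
  "cont_L1 h \<longleftrightarrow> continuous_on {0..} h \<and> (\<exists>B. \<forall>T\<ge>0. integral {0..T} (\<lambda>t. \<bar>h t\<bar>) \<le> B)"

lemma cont_L1_integral_tendsto:
  assumes "cont_L1 h"
  shows "\<exists>L. ((\<lambda>T. integral {0..T} h) \<longlongrightarrow> L) at_top"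
proof -
  obtain B where B: "\<And>T. 0 \<le> T \<Longrightarrow> integral {0..T} (\<lambda>t. \<bar>h t\<bar>) \<le> B"
    and h: "continuous_on {0..} h"
    using assms unfolding cont_L1_def by auto
  have abs_h: "continuous_on {0..} (\<lambda>t. \<bar>h t\<bar>)" and neg_part: "continuous_on {0..} (\<lambda>t. \<bar>h t\<bar> - h t)"
    using h by (auto intro!: continuous_intros)
  obtain L1 where L1: "((\<lambda>T. integral {0..T} (\<lambda>t. \<bar>h t\<bar>)) \<longlongrightarrow> L1) at_top"
    using tendsto_mono_bounded_at_top[of "\<lambda>T. integral {0..T} (\<lambda>t. \<bar>h t\<bar>)" B]
      B integral_Icc_mono_nonneg[OF abs_h] by auto
  have "integral {0..T} (\<lambda>t. \<bar>h t\<bar> - h t) \<le> 2 * B" if "0 \<le> T" for T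
  proof -
    have "integral {0..T} (\<lambda>t. \<bar>h t\<bar> - h t) \<le> integral {0..T} (\<lambda>t. 2 * \<bar>h t\<bar>)"
      by (rule integral_le) (use abs_h neg_part that in
          \<open>auto intro!: integrable_on_Icc_if_continuous_Ici continuous_intros\<close>)
    then show ?thesis
      using B[OF that] by simp
  qed
  then obtain L2 where L2: "((\<lambda>T. integral {0..T} (\<lambda>t. \<bar>h t\<bar> - h t)) \<longlongrightarrow> L2) at_top"
    using tendsto_mono_bounded_at_top[of "\<lambda>T. integral {0..T} (\<lambda>t. \<bar>h t\<bar> - h t)" "2 * B"]
      integral_Icc_mono_nonneg[OF neg_part] by auto
  have "\<forall>\<^sub>F T in at_top. integral {0..T} (\<lambda>t. \<bar>h t\<bar>) - integral {0..T} (\<lambda>t. \<bar>h t\<bar> - h t)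
      = integral {0..T} h"
    using eventually_ge_at_top[of 0]
    by eventually_elim
      (subst integral_diff, auto intro: integrable_on_Icc_if_continuous_Ici abs_h h)
  with tendsto_diff[OF L1 L2] have "((\<lambda>T. integral {0..T} h) \<longlongrightarrow> L1 - L2) at_top"
    by (rule Lim_transform_eventually)
  then show ?thesis
    by blast
qed

lemma cont_L1_dominated:
  assumes "continuous_on {0..} h" "\<And>t. 0 \<le> t \<Longrightarrow> \<bar>h t\<bar> \<le> g t" "cont_L1 g"
  shows "cont_L1 h"
proof -
  obtain B where B: "\<And>T. 0 \<le> T \<Longrightarrow> integral {0..T} (\<lambda>t. \<bar>g t\<bar>) \<le> B"
    and g: "continuous_on {0..} g"
    using assms unfolding cont_L1_def by auto
  have "integral {0..T} (\<lambda>t. \<bar>h t\<bar>) \<le> integral {0..T} (\<lambda>t. \<bar>g t\<bar>)" if "0 \<le> T" for T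
    by (rule integral_le) (use assms(1,2) g that in
        \<open>force intro!: integrable_on_Icc_if_continuous_Ici continuous_intros\<close>)+
  then show ?thesis
    using assms(1) B unfolding cont_L1_def by (meson order_trans)
qed

lemma cont_L1_abs: "cont_L1 h \<Longrightarrow> cont_L1 (\<lambda>t. \<bar>h t\<bar>)"
  unfolding cont_L1_def by (auto intro!: continuous_intros)

lemma cont_L1_add:
  assumes "cont_L1 g" "cont_L1 h"
  shows "cont_L1 (\<lambda>t. g t + h t)"
proof -
  obtain B1 B2 where B1: "\<And>T. 0 \<le> T \<Longrightarrow> integral {0..T} (\<lambda>t. \<bar>g t\<bar>) \<le> B1"
    and B2: "\<And>T. 0 \<le> T \<Longrightarrow> integral {0..T} (\<lambda>t. \<bar>h t\<bar>) \<le> B2"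
    and g: "continuous_on {0..} g" and h: "continuous_on {0..} h"
    using assms unfolding cont_L1_def by auto
  have "integral {0..T} (\<lambda>t. \<bar>g t + h t\<bar>) \<le> B1 + B2" if "0 \<le> T" for T
  proof -
    have int: "(\<lambda>t. \<bar>g t\<bar>) integrable_on {0..T}" "(\<lambda>t. \<bar>h t\<bar>) integrable_on {0..T}"
      using g h by (auto intro!: integrable_on_Icc_if_continuous_Ici continuous_intros)
    have "integral {0..T} (\<lambda>t. \<bar>g t + h t\<bar>) \<le> integral {0..T} (\<lambda>t. \<bar>g t\<bar> + \<bar>h t\<bar>)"
      by (rule integral_le) (use g h int in
          \<open>auto intro!: integrable_on_Icc_if_continuous_Ici continuous_intros abs_triangle_ineq\<close>)
    then show ?thesis
      using B1[OF that] B2[OF that] integral_add[OF int] by linarith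
  qed
  then show ?thesis
    using g h unfolding cont_L1_def by (auto intro!: continuous_intros)
qed

lemma cont_L1_cmult:
  assumes "cont_L1 h"
  shows "cont_L1 (\<lambda>t. c * h t)"
proof -
  obtain B where B: "\<And>T. 0 \<le> T \<Longrightarrow> integral {0..T} (\<lambda>t. \<bar>h t\<bar>) \<le> B"
    and h: "continuous_on {0..} h"
    using assms unfolding cont_L1_def by auto
  have "integral {0..T} (\<lambda>t. \<bar>c * h t\<bar>) \<le> \<bar>c\<bar> * B" if "0 \<le> T" for T
    using B[OF that] by (simp add: abs_mult mult_left_mono)
  then show ?thesis
    using h unfolding cont_L1_def by (auto intro!: continuous_intros)
qed

lemma cont_L1_diff: "cont_L1 g \<Longrightarrow> cont_L1 h \<Longrightarrow> cont_L1 (\<lambda>t. g t - h t)"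
  using cont_L1_add[of g "\<lambda>t. (-1) * h t"] cont_L1_cmult[of h "-1"] by simp

lemma cont_L1_mult_bounded:
  assumes "cont_L1 h" "continuous_on {0..} b" "bounded (b ` {0..})"
  shows "cont_L1 (\<lambda>t. b t * h t)"
proof -
  obtain M where M: "\<And>t. 0 \<le> t \<Longrightarrow> \<bar>b t\<bar> \<le> M"
    using assms(3) by (auto simp: bounded_iff)
  show ?thesis
  proof (rule cont_L1_dominated)
    show "continuous_on {0..} (\<lambda>t. b t * h t)"
      using assms unfolding cont_L1_def by (auto intro!: continuous_intros)
    show "cont_L1 (\<lambda>t. M * \<bar>h t\<bar>)"
      by (intro cont_L1_cmult cont_L1_abs assms(1))
    show "\<bar>b t * h t\<bar> \<le> M * \<bar>h t\<bar>" if "0 \<le> t" for t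
      using M[OF that] by (simp add: abs_mult mult_right_mono)
  qed
qed

lemma cont_L1_nonneg_if_tail_bounded:
  fixes Z :: "real \<Rightarrow> real"
  assumes Z: "continuous_on {0..} Z" and nonneg: "\<And>t. 0 \<le> t \<Longrightarrow> 0 \<le> Z t"
    and t0: "0 \<le> t0" and tail: "\<And>T. t0 \<le> T \<Longrightarrow> integral {t0..T} Z \<le> B"
  shows "cont_L1 Z"
proof -
  have "integral {0..T} (\<lambda>t. \<bar>Z t\<bar>) \<le> integral {0..t0} Z + B" if T: "0 \<le> T" for T
  proof -
    have abs_Z: "integral {0..T} (\<lambda>t. \<bar>Z t\<bar>) = integral {0..T} Z"
      by (rule integral_cong) (use nonneg in auto)
    show ?thesis
    proof (cases "T \<le> t0")
      case True
      then show ?thesis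
        using integral_Icc_mono_nonneg[OF Z nonneg T True] abs_Z tail[of t0] by simp
    next
      case False
      have "integral {0..t0} Z + integral {t0..T} Z = integral {0..T} Z"
        using False t0 by (intro Henstock_Kurzweil_Integration.integral_combine
            integrable_on_Icc_if_continuous_Ici Z) auto
      then show ?thesis
        using tail[of T] False abs_Z by linarith
    qed
  qed
  then show ?thesis
    using Z unfolding cont_L1_def by blast
qed

lemma integral_tendsto_if_deriv_minus_L1:
  fixes F G g h :: "real \<Rightarrow> real"
  assumes G: "\<And>t. 0 \<le> t \<Longrightarrow> (G has_real_derivative g t) (at t within {0..})"
    and "(G \<longlongrightarrow> l) at_top" and "cont_L1 h"
    and F: "\<And>t. 0 \<le> t \<Longrightarrow> F t = g t - h t"
  shows "\<exists>L. ((\<lambda>T. integral {0..T} F) \<longlongrightarrow> L) at_top"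
proof -
  obtain H where H: "((\<lambda>T. integral {0..T} h) \<longlongrightarrow> H) at_top"
    using cont_L1_integral_tendsto[OF assms(3)] by blast
  have "integral {0..T} F = G T - G 0 - integral {0..T} h" if "0 \<le> T" for T
  proof -
    have "h integrable_on {0..T}"
      using assms(3) by (auto simp: cont_L1_def intro: integrable_on_Icc_if_continuous_Ici)
    with has_integral_if_deriv_Ici[OF G order_refl that]
    have "((\<lambda>t. g t - h t) has_integral G T - G 0 - integral {0..T} h) {0..T}"
      by (intro has_integral_diff) (auto simp: has_integral_integrable_integral)
    then show ?thesis
      using F by (intro integral_unique) (rule has_integral_eq[rotated], auto)
  qed
  then have "\<forall>\<^sub>F T in at_top. G T - G 0 - integral {0..T} h = integral {0..T} F"
    by (auto simp: eventually_at_top_linorder intro!: exI[of _ 0])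
  with tendsto_diff[OF tendsto_diff[OF assms(2) tendsto_const] H]
  show ?thesis
    by (blast intro: Lim_transform_eventually)
qed

section \<open>Integration by parts against a monotone weight\<close>

lemma has_integral_mult_second_mean_value:
  fixes g G \<phi> :: "real \<Rightarrow> real"
  assumes G: "\<And>t. 0 \<le> t \<Longrightarrow> (g has_integral G t) {0..t}"
    and \<phi>_mono: "\<And>s t. 0 \<le> s \<Longrightarrow> s \<le> t \<Longrightarrow> \<phi> s \<le> \<phi> t"
    and ab: "0 \<le> a" "a \<le> b"
  shows "\<exists>c\<in>{a..b}. ((\<lambda>s. \<phi> s * g s) has_integral \<phi> a * (G c - G a) + \<phi> b * (G b - G c)) {a..b}"
proof -
  have g_int: "g integrable_on {r..s}" if "0 \<le> r" "r \<le> s" for r s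
    using integrable_subinterval_real[of g 0 s r s] G[of s] that by auto
  have G_incr: "integral {r..s} g = G s - G r" if "0 \<le> r" "r \<le> s" for r s
  proof -
    have "integral {0..r} g + integral {r..s} g = integral {0..s} g"
      using that by (intro Henstock_Kurzweil_Integration.integral_combine g_int) auto
    then show ?thesis
      using G that by (simp add: has_integral_integrable_integral)
  qed
  obtain c where "c \<in> {a..b}"
    and "((\<lambda>s. \<phi> s * g s) has_integral \<phi> a * integral {a..c} g + \<phi> b * integral {c..b} g) {a..b}"
    using second_mean_value_theorem_full[OF g_int[OF ab] ab(2), of \<phi>] \<phi>_mono ab by auto
  then show ?thesis
    using G_incr[of a c] G_incr[of c b] ab by (intro bexI[of _ c]) auto
qed

lemma has_real_derivative_if_mean_value_increments:
  fixes \<Psi> G \<phi> :: "real \<Rightarrow> real"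
  assumes incr: "\<And>y. 0 \<le> y \<Longrightarrow> \<exists>c. min y s \<le> c \<and> c \<le> max y s \<and> \<Psi> y - \<Psi> s = G c * (\<phi> s - \<phi> y)"
    and G: "continuous (at s within {0..}) G"
    and \<phi>: "(\<phi> has_real_derivative \<phi>' s) (at s within {0..})"
    and s: "0 \<le> s"
  shows "(\<Psi> has_real_derivative - \<phi>' s * G s) (at s within {0..})"
proof -
  obtain c where c: "\<And>y. 0 \<le> y \<Longrightarrow> min y s \<le> c y \<and> c y \<le> max y s \<and> \<Psi> y - \<Psi> s = G (c y) * (\<phi> s - \<phi> y)"
    using incr by metis
  have "((\<lambda>y. c y - s) \<longlongrightarrow> 0) (at s within {0..})"
  proof (rule Lim_null_comparison[where g="\<lambda>y. \<bar>y - s\<bar>"])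
    show "\<forall>\<^sub>F y in at s within {0..}. norm (c y - s) \<le> \<bar>y - s\<bar>"
      unfolding eventually_at_filter by (rule always_eventually) (use c in \<open>force simp: abs_le_iff\<close>)
    show "((\<lambda>y. \<bar>y - s\<bar>) \<longlongrightarrow> 0) (at s within {0..})"
      by (intro tendsto_rabs_zero LIM_zero tendsto_ident_at)
  qed
  from tendsto_add[OF this tendsto_const[of s]]
  have c_lim: "(c \<longlongrightarrow> s) (at s within {0..})"
    by simp
  have G_c: "((\<lambda>y. G (c y)) \<longlongrightarrow> G s) (at s within {0..})"
  proof (rule continuous_within_tendsto_compose[OF G _ c_lim])
    show "\<forall>\<^sub>F y in at s within {0..}. c y \<in> {0..}"
      unfolding eventually_at_filter by (rule always_eventually) (use c s in force)
  qed
  have "\<forall>\<^sub>F y in at s within {0..}. G (c y) * - ((\<phi> y - \<phi> s) / (y - s)) = (\<Psi> y - \<Psi> s) / (y - s)"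
    unfolding eventually_at_filter
  proof (rule always_eventually, intro allI impI)
    fix y
    assume "y \<noteq> s" "y \<in> {0..}"
    then have incr_y: "\<Psi> y - \<Psi> s = G (c y) * (\<phi> s - \<phi> y)" and "y - s \<noteq> 0"
      using c[of y] by auto
    then show "G (c y) * - ((\<phi> y - \<phi> s) / (y - s)) = (\<Psi> y - \<Psi> s) / (y - s)"
      unfolding incr_y by (simp add: field_simps)
  qed
  with tendsto_mult[OF G_c tendsto_minus[OF \<phi>[unfolded has_field_derivative_iff]]]
  have "((\<lambda>y. (\<Psi> y - \<Psi> s) / (y - s)) \<longlongrightarrow> G s * - \<phi>' s) (at s within {0..})"
    by (rule Lim_transform_eventually)
  then show ?thesis
    by (simp add: has_field_derivative_iff mult.commute)
qed

lemma integral_mult_increment_second_mean_value: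
  fixes g G \<phi> :: "real \<Rightarrow> real"
  assumes G: "\<And>t. 0 \<le> t \<Longrightarrow> (g has_integral G t) {0..t}"
    and \<phi>_mono: "\<And>s t. 0 \<le> s \<Longrightarrow> s \<le> t \<Longrightarrow> \<phi> s \<le> \<phi> t"
    and ab: "0 \<le> a" "a \<le> b"
  shows "\<exists>c\<in>{a..b}. (integral {0..b} (\<lambda>r. \<phi> r * g r) - \<phi> b * G b)
    - (integral {0..a} (\<lambda>r. \<phi> r * g r) - \<phi> a * G a) = G c * (\<phi> a - \<phi> b)"
proof -
  have mean_value: "\<exists>c\<in>{r..s}.
      ((\<lambda>s. \<phi> s * g s) has_integral \<phi> r * (G c - G r) + \<phi> s * (G s - G c)) {r..s}"
    if "0 \<le> r" "r \<le> s" for r s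
    by (rule has_integral_mult_second_mean_value[OF G \<phi>_mono that])
  obtain c where c: "c \<in> {a..b}"
    and I: "((\<lambda>s. \<phi> s * g s) has_integral \<phi> a * (G c - G a) + \<phi> b * (G b - G c)) {a..b}"
    using mean_value[OF ab] by blast
  have "(\<lambda>r. \<phi> r * g r) integrable_on {0..b}"
    using mean_value[OF order_refl order_trans[OF ab]] by (meson has_integral_integrable)
  then have "integral {0..a} (\<lambda>r. \<phi> r * g r) + integral {a..b} (\<lambda>r. \<phi> r * g r)
      = integral {0..b} (\<lambda>r. \<phi> r * g r)"
    using ab by (intro Henstock_Kurzweil_Integration.integral_combine) auto
  then have "(integral {0..b} (\<lambda>r. \<phi> r * g r) - \<phi> b * G b) - (integral {0..a} (\<lambda>r. \<phi> r * g r) - \<phi> a * G a)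
      = (\<phi> a * (G c - G a) + \<phi> b * (G b - G c)) - \<phi> b * G b + \<phi> a * G a"
    using integral_unique[OF I] by simp
  also have "\<dots> = G c * (\<phi> a - \<phi> b)"
    by (simp add: algebra_simps)
  finally show ?thesis
    using c by blast
qed

text \<open>The primitive \<open>G\<close> is only an indefinite Henstock-Kurzweil integral, so the library's
  integration by parts does not apply; instead the increments of \<open>\<integral>\<^sub>0\<^sup>s \<phi> g - \<phi> s G s\<close> are controlled
  by the second mean value theorem.\<close>

lemma integration_by_parts_monotone_Ici:
  fixes g G \<phi> \<phi>' :: "real \<Rightarrow> real"
  assumes G: "\<And>t. 0 \<le> t \<Longrightarrow> (g has_integral G t) {0..t}"
    and \<phi>: "\<And>t. 0 \<le> t \<Longrightarrow> (\<phi> has_real_derivative \<phi>' t) (at t within {0..})"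
    and \<phi>'_cont: "continuous_on {0..} \<phi>'"
    and \<phi>_mono: "\<And>s t. 0 \<le> s \<Longrightarrow> s \<le> t \<Longrightarrow> \<phi> s \<le> \<phi> t"
    and t: "0 \<le> t"
  shows "((\<lambda>s. \<phi> s * g s) has_integral \<phi> t * G t - integral {0..t} (\<lambda>s. \<phi>' s * G s)) {0..t}"
proof -
  have G_cont: "continuous_on {0..} G"
    by (rule continuous_on_indefinite_integral_Ici[OF G])
  define \<Psi> where "\<Psi> s = integral {0..s} (\<lambda>r. \<phi> r * g r) - \<phi> s * G s" for s
  have \<Psi>_incr: "\<exists>c\<in>{a..b}. \<Psi> b - \<Psi> a = G c * (\<phi> a - \<phi> b)" if "0 \<le> a" "a \<le> b" for a b
    unfolding \<Psi>_def by (rule integral_mult_increment_second_mean_value[OF G \<phi>_mono that])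
  have \<Psi>_deriv: "(\<Psi> has_real_derivative - \<phi>' s * G s) (at s within {0..})" if s: "0 \<le> s" for s
  proof (rule has_real_derivative_if_mean_value_increments)
    show "(\<phi> has_real_derivative \<phi>' s) (at s within {0..})" "0 \<le> s"
      by (fact \<phi>[OF s], fact s)
    show "continuous (at s within {0..}) G"
      using G_cont s by (simp add: continuous_on_eq_continuous_within)
    show "\<exists>c. min y s \<le> c \<and> c \<le> max y s \<and> \<Psi> y - \<Psi> s = G c * (\<phi> s - \<phi> y)" if y: "0 \<le> y" for y
    proof (cases "s \<le> y")
      case True
      then show ?thesis
        using \<Psi>_incr[OF s True] by auto
    next
      case False
      then obtain c where "c \<in> {y..s}" "\<Psi> s - \<Psi> y = G c * (\<phi> y - \<phi> s)"
        using \<Psi>_incr[of y s] y by auto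
      then show ?thesis
        using False by (intro exI[of _ c]) (auto simp: algebra_simps)
    qed
  qed
  have "((\<lambda>s. \<Psi> s + integral {0..s} (\<lambda>r. \<phi>' r * G r)) has_real_derivative 0) (at s within {0..})"
    if "0 \<le> s" for s
    using DERIV_add[OF \<Psi>_deriv[OF that] has_real_derivative_integral_Ici[OF _ that, of "\<lambda>r. \<phi>' r * G r"]]
    by (simp add: continuous_intros \<phi>'_cont G_cont)
  from constant_if_deriv_zero_Ici[OF this t]
  have "integral {0..t} (\<lambda>r. \<phi> r * g r) = \<phi> t * G t - integral {0..t} (\<lambda>r. \<phi>' r * G r)"
    using G[of 0] unfolding \<Psi>_def by (simp add: has_integral_integrable_integral)
  moreover have "(\<lambda>r. \<phi> r * g r) integrable_on {0..t}"
    using has_integral_mult_second_mean_value[OF G \<phi>_mono order_refl t] by (meson has_integral_integrable)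
  ultimately show ?thesis
    by (simp add: has_integral_integrable_integral)
qed

section \<open>Exponential kernels and trigonometric polynomials\<close>

lemma kernel_integral_le:
  fixes v :: "real \<Rightarrow> real" and c :: real
  assumes v: "continuous_on {0..} v" and c: "0 < c" and ab: "0 \<le> a" "a \<le> b"
    and M: "\<And>s. s \<in> {a..b} \<Longrightarrow> \<bar>v s\<bar> \<le> M"
  shows "integral {a..b} (\<lambda>s. exp (- c * (t - s)) * \<bar>v s\<bar>) \<le> M * exp (- c * (t - b)) / c"
proof -
  have "0 \<le> M"
    using M[of a] ab by force
  have kernel: "((\<lambda>s. exp (- c * (t - s))) has_integral (exp (- c * (t - b)) - exp (- c * (t - a))) / c) {a..b}"
    by (rule has_integral_exp_kernel[OF ab(2) c])
  have "integral {a..b} (\<lambda>s. exp (- c * (t - s)) * \<bar>v s\<bar>) \<le> integral {a..b} (\<lambda>s. M * exp (- c * (t - s)))"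
  proof (rule integral_le)
    show "(\<lambda>s. exp (- c * (t - s)) * \<bar>v s\<bar>) integrable_on {a..b}"
      using v ab by (intro integrable_on_Icc_if_continuous_Ici continuous_intros) auto
    show "(\<lambda>s. M * exp (- c * (t - s))) integrable_on {a..b}"
      using has_integral_mult_right[OF kernel, of M] by blast
  qed (use M in \<open>auto simp: mult.commute intro: mult_left_mono\<close>)
  also have "\<dots> = M * ((exp (- c * (t - b)) - exp (- c * (t - a))) / c)"
    using integral_unique[OF kernel] by simp
  also have "\<dots> \<le> M * exp (- c * (t - b)) / c"
    using \<open>0 \<le> M\<close> c by (simp add: divide_right_mono mult_left_mono field_simps)
  finally show ?thesis .
qed

lemma kernel_integral_tendsto_0:
  fixes v :: "real \<Rightarrow> real" and c :: real
  assumes v: "continuous_on {0..} v" and c: "0 < c" and lim: "(v \<longlongrightarrow> 0) at_top"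
  shows "((\<lambda>t. integral {0..t} (\<lambda>s. exp (- c * (t - s)) * \<bar>v s\<bar>)) \<longlongrightarrow> 0) at_top"
proof (rule tendstoI)
  fix e :: real
  assume e: "0 < e"
  then obtain S0 where S0: "\<And>s. S0 \<le> s \<Longrightarrow> \<bar>v s\<bar> < e * c / 2"
    using tendstoD[OF lim, of "e * c / 2"] c by (auto simp: eventually_at_top_linorder dist_real_def)
  define S where "S = max 0 S0"
  have S: "0 \<le> S" "\<And>s. S \<le> s \<Longrightarrow> \<bar>v s\<bar> \<le> e * c / 2"
    using S0 by (auto simp: S_def less_imp_le)
  define I where "I = integral {0..S} (\<lambda>s. exp (- c * (S - s)) * \<bar>v s\<bar>)"
  have "((\<lambda>t. exp (c * S) * exp (- c * t) * I) \<longlongrightarrow> 0) at_top"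
    by (rule tendsto_mult_left_zero[OF tendsto_mult_right_zero[OF tendsto_exp_neg_at_top[OF c]]])
  then have "\<forall>\<^sub>F t in at_top. exp (c * S) * exp (- c * t) * I < e / 2"
    using e by (intro order_tendstoD) auto
  then show "\<forall>\<^sub>F t in at_top. dist (integral {0..t} (\<lambda>s. exp (- c * (t - s)) * \<bar>v s\<bar>)) 0 < e"
    using eventually_ge_at_top[of S]
  proof eventually_elim
    case (elim t)
    have int: "(\<lambda>s. exp (- c * (t - s)) * \<bar>v s\<bar>) integrable_on {a..b}" if "0 \<le> a" for a b
      using v that by (intro integrable_on_Icc_if_continuous_Ici continuous_intros)
    have "integral {0..S} (\<lambda>s. exp (- c * (t - s)) * \<bar>v s\<bar>)
        = integral {0..S} (\<lambda>s. (exp (c * S) * exp (- c * t)) * (exp (- c * (S - s)) * \<bar>v s\<bar>))"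
      by (intro integral_cong) (simp flip: exp_add add: algebra_simps)
    then have "integral {0..S} (\<lambda>s. exp (- c * (t - s)) * \<bar>v s\<bar>) = exp (c * S) * exp (- c * t) * I"
      by (simp add: I_def)
    moreover have "integral {S..t} (\<lambda>s. exp (- c * (t - s)) * \<bar>v s\<bar>) \<le> e * c / 2 * exp (- c * (t - t)) / c"
      using S elim by (intro kernel_integral_le v c) auto
    then have "integral {S..t} (\<lambda>s. exp (- c * (t - s)) * \<bar>v s\<bar>) \<le> e / 2"
      using c by simp
    moreover have "integral {0..S} (\<lambda>s. exp (- c * (t - s)) * \<bar>v s\<bar>) + integral {S..t} (\<lambda>s. exp (- c * (t - s)) * \<bar>v s\<bar>)
        = integral {0..t} (\<lambda>s. exp (- c * (t - s)) * \<bar>v s\<bar>)"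
      using S elim by (intro Henstock_Kurzweil_Integration.integral_combine int) auto
    moreover have "0 \<le> integral {0..t} (\<lambda>s. exp (- c * (t - s)) * \<bar>v s\<bar>)"
      by (intro integral_nonneg int) auto
    ultimately show ?case
      using elim by (simp add: dist_real_def)
  qed
qed

definition trig_poly :: "real \<Rightarrow> real \<Rightarrow> real \<Rightarrow> real \<Rightarrow> real" where
  "trig_poly \<omega> a b t = a * cos (\<omega> * t) + b * sin (\<omega> * t)"

lemma trig_poly_deriv:
  "(trig_poly \<omega> a b has_real_derivative \<omega> * (b * cos (\<omega> * t) - a * sin (\<omega> * t))) (at t within S)"
  unfolding trig_poly_def[abs_def]
  by (rule derivative_eq_intros refl | simp add: algebra_simps)+

lemma continuous_on_trig_poly: "continuous_on S (trig_poly \<omega> a b)"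
  unfolding trig_poly_def[abs_def] by (intro continuous_intros)

lemma abs_trig_poly_le: "\<bar>trig_poly \<omega> a b t\<bar> \<le> \<bar>a\<bar> + \<bar>b\<bar>"
proof -
  have "\<bar>a * cos (\<omega> * t)\<bar> \<le> \<bar>a\<bar>" "\<bar>b * sin (\<omega> * t)\<bar> \<le> \<bar>b\<bar>"
    by (simp_all add: abs_mult mult_left_le)
  then show ?thesis
    unfolding trig_poly_def by linarith
qed

lemma Bfun_trig_poly: "Bfun (trig_poly \<omega> a b) F"
  using abs_trig_poly_le by (intro BfunI always_eventually) auto

lemma Bfun_cos_sin:
  fixes c \<omega> :: real
  shows "Bfun (\<lambda>t. c * cos (\<omega> * t)) F" "Bfun (\<lambda>t. c * sin (\<omega> * t)) F"
  using Bfun_trig_poly[of \<omega> c 0] Bfun_trig_poly[of \<omega> 0 c] by (simp_all add: trig_poly_def[abs_def])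

lemma cos_mult_trig_poly_identity:
  fixes \<omega> a b t :: real
  shows "cos (\<omega> * t) * trig_poly \<omega> (\<omega> * b) (- \<omega> * a) t + \<omega> * sin (\<omega> * t) * trig_poly \<omega> a b t = \<omega> * b"
proof -
  have "cos (\<omega> * t) * trig_poly \<omega> (\<omega> * b) (- \<omega> * a) t + \<omega> * sin (\<omega> * t) * trig_poly \<omega> a b t
      = \<omega> * b * ((sin (\<omega> * t))^2 + (cos (\<omega> * t))^2)"
    by (simp add: trig_poly_def algebra_simps power2_eq_square del: sin_cos_squared_add sin_cos_squared_add2 sin_cos_squared_add3)
  then show ?thesis
    by simp
qed

lemma sin_mult_trig_poly_identity:
  fixes \<omega> a b t :: real
  shows "sin (\<omega> * t) * trig_poly \<omega> (\<omega> * b) (- \<omega> * a) t - \<omega> * cos (\<omega> * t) * trig_poly \<omega> a b t = - \<omega> * a"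
proof -
  have "sin (\<omega> * t) * trig_poly \<omega> (\<omega> * b) (- \<omega> * a) t - \<omega> * cos (\<omega> * t) * trig_poly \<omega> a b t
      = - \<omega> * a * ((sin (\<omega> * t))^2 + (cos (\<omega> * t))^2)"
    by (simp add: trig_poly_def algebra_simps power2_eq_square del: sin_cos_squared_add sin_cos_squared_add2 sin_cos_squared_add3)
  then show ?thesis
    by simp
qed

lemma linear_system_2x2_solvable:
  fixes \<kappa> \<omega> a b :: real
  assumes "0 < \<kappa>"
  obtains a' b' where "\<kappa> * a' + \<omega> * b' = a" "\<kappa> * b' - \<omega> * a' = b"
proof -
  define d where "d = \<kappa>^2 + \<omega>^2"
  have "d \<noteq> 0"
    using assms unfolding d_def by (simp add: add_pos_nonneg)
  define a' where "a' = (\<kappa> * a - \<omega> * b) / d"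
  define b' where "b' = (\<omega> * a + \<kappa> * b) / d"
  have "\<kappa> * a' + \<omega> * b' = (\<kappa> * (\<kappa> * a - \<omega> * b) + \<omega> * (\<omega> * a + \<kappa> * b)) / d"
    using \<open>d \<noteq> 0\<close> by (simp add: a'_def b'_def field_simps)
  also have "\<dots> = d * a / d"
    by (simp add: d_def power2_eq_square algebra_simps)
  finally have eq1: "\<kappa> * a' + \<omega> * b' = a"
    using \<open>d \<noteq> 0\<close> by simp
  have "\<kappa> * b' - \<omega> * a' = (\<kappa> * (\<omega> * a + \<kappa> * b) - \<omega> * (\<kappa> * a - \<omega> * b)) / d"
    using \<open>d \<noteq> 0\<close> by (simp add: a'_def b'_def field_simps)
  also have "\<dots> = d * b / d"
    by (simp add: d_def power2_eq_square algebra_simps)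
  finally have eq2: "\<kappa> * b' - \<omega> * a' = b"
    using \<open>d \<noteq> 0\<close> by simp
  then show ?thesis
    using eq1 that by blast
qed

section \<open>The equation \<open>Z' + k Z = v\<close> with \<open>k \<rightarrow> \<kappa> > 0\<close>\<close>

text \<open>\<open>fund\<close> is the fundamental solution and \<open>res v\<close> the solution with \<open>Z 0 = 0\<close> (variation of
  constants).\<close>

locale relaxation =
  fixes k :: "real \<Rightarrow> real" and \<kappa> :: real
  assumes k_cont: "continuous_on {0..} k"
    and k_tendsto: "(k \<longlongrightarrow> \<kappa>) at_top"
    and \<kappa>_pos: "0 < \<kappa>"
begin

definition fund :: "real \<Rightarrow> real" where
  "fund t = exp (- integral {0..t} k)"

definition res :: "(real \<Rightarrow> real) \<Rightarrow> real \<Rightarrow> real" where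
  "res v t = fund t * integral {0..t} (\<lambda>s. v s / fund s)"

lemma fund_pos: "0 < fund t"
  by (simp add: fund_def)

lemma fund_0: "fund 0 = 1"
  by (simp add: fund_def)

lemma fund_deriv:
  assumes "0 \<le> t"
  shows "(fund has_real_derivative - k t * fund t) (at t within {0..})"
proof -
  have "((\<lambda>t. exp (- integral {0..t} k)) has_real_derivative exp (- integral {0..t} k) * - k t)
      (at t within {0..})"
    using has_real_derivative_integral_Ici[OF k_cont assms] by (intro derivative_eq_intros) auto
  then show ?thesis
    unfolding fund_def[abs_def] by (simp add: mult.commute)
qed

lemma fund_cont: "continuous_on {0..} fund"
  by (rule continuous_on_Ici_if_deriv[OF fund_deriv])

lemma k_eventually_ge:
  obtains t0 where "0 \<le> t0" "\<And>r. t0 \<le> r \<Longrightarrow> \<kappa> / 2 \<le> k r"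
proof -
  have "\<kappa> / 2 < \<kappa>"
    using \<kappa>_pos by simp
  then have "\<forall>\<^sub>F r in at_top. \<kappa> / 2 < k r"
    by (rule order_tendstoD(1)[OF k_tendsto])
  then obtain N where "\<And>r. N \<le> r \<Longrightarrow> \<kappa> / 2 < k r"
    by (auto simp: eventually_at_top_linorder)
  then show ?thesis
    using that[of "max 0 N"] by force
qed

lemma integral_k_ge_linear:
  obtains C where "\<And>s t. 0 \<le> s \<Longrightarrow> s \<le> t \<Longrightarrow> \<kappa> / 2 * (t - s) - C \<le> integral {s..t} k"
proof -
  obtain t0 where t0: "0 \<le> t0" "\<And>r. t0 \<le> r \<Longrightarrow> \<kappa> / 2 \<le> k r"
    using k_eventually_ge by blast
  have "bounded (k ` {0..t0})"
    by (intro compact_imp_bounded compact_continuous_image continuous_on_subset[OF k_cont]) auto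
  then obtain m0 where "\<forall>y\<in>k ` {0..t0}. norm y \<le> m0"
    unfolding bounded_iff by blast
  then have low: "- \<bar>m0\<bar> \<le> k r" if "r \<in> {0..t0}" for r
    using that by force
  have "0 \<le> \<kappa> / 2"
    using \<kappa>_pos by simp
  from integral_ge_linear_minus_const[OF k_cont this t0(1) abs_ge_zero low t0(2)]
  show ?thesis
    by (rule that)
qed

lemma fund_ratio_le:
  obtains K where "0 < K" "\<And>s t. 0 \<le> s \<Longrightarrow> s \<le> t \<Longrightarrow> fund t \<le> K * exp (- (\<kappa> / 2) * (t - s)) * fund s"
proof -
  obtain C where C: "\<And>s t. 0 \<le> s \<Longrightarrow> s \<le> t \<Longrightarrow> \<kappa> / 2 * (t - s) - C \<le> integral {s..t} k"
    using integral_k_ge_linear by blast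
  have "fund t \<le> exp C * exp (- (\<kappa> / 2) * (t - s)) * fund s" if "0 \<le> s" "s \<le> t" for s t
  proof -
    have "integral {0..s} k + integral {s..t} k = integral {0..t} k"
      using that by (intro Henstock_Kurzweil_Integration.integral_combine
          integrable_on_Icc_if_continuous_Ici k_cont) auto
    then have "fund t = exp (- integral {s..t} k) * fund s"
      unfolding fund_def by (simp flip: exp_add add: algebra_simps)
    also have "\<dots> \<le> exp (C + - (\<kappa> / 2) * (t - s)) * fund s"
      using C[OF that] fund_pos[of s] by (intro mult_right_mono) auto
    finally show ?thesis
      unfolding exp_add by (simp add: mult.assoc)
  qed
  then show ?thesis
    using that[of "exp C"] by auto
qed

lemma fund_tendsto_0: "(fund \<longlongrightarrow> 0) at_top"
proof -
  obtain K where K: "0 < K" "\<And>s t. 0 \<le> s \<Longrightarrow> s \<le> t \<Longrightarrow> fund t \<le> K * exp (- (\<kappa> / 2) * (t - s)) * fund s"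
    using fund_ratio_le by blast
  show ?thesis
  proof (rule Lim_null_comparison)
    show "\<forall>\<^sub>F t in at_top. norm (fund t) \<le> K * exp (- (\<kappa> / 2) * t)"
      using eventually_ge_at_top[of 0]
    proof eventually_elim
      case (elim t)
      then show ?case
        using K(2)[of 0 t] fund_pos[of t] by (simp add: fund_0)
    qed
    show "((\<lambda>t. K * exp (- (\<kappa> / 2) * t)) \<longlongrightarrow> 0) at_top"
      using tendsto_mult_right_zero[OF tendsto_exp_neg_at_top, of "\<kappa> / 2" K] \<kappa>_pos by simp
  qed
qed

lemma continuous_on_div_fund: "continuous_on {0..} v \<Longrightarrow> continuous_on {0..} (\<lambda>s. v s / fund s)"
  using fund_pos by (intro continuous_intros fund_cont) (auto simp: less_imp_neq[symmetric])

lemma res_deriv: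
  assumes v: "continuous_on {0..} v" and t: "0 \<le> t"
  shows "(res v has_real_derivative v t - k t * res v t) (at t within {0..})"
proof -
  have "((\<lambda>t. fund t * integral {0..t} (\<lambda>s. v s / fund s)) has_real_derivative
      - k t * fund t * integral {0..t} (\<lambda>s. v s / fund s) + v t / fund t * fund t) (at t within {0..})"
    by (intro DERIV_mult fund_deriv t has_real_derivative_integral_Ici continuous_on_div_fund v)
  then show ?thesis
    unfolding res_def[abs_def] using fund_pos[of t] by (simp add: res_def algebra_simps)
qed

lemma res_cont [continuous_intros]: "continuous_on {0..} v \<Longrightarrow> continuous_on {0..} (res v)"
  by (rule continuous_on_Ici_if_deriv[OF res_deriv])

lemma res_0: "res v 0 = 0"
  by (simp add: res_def)

lemma res_unique:
  assumes v: "continuous_on {0..} v"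
    and Z: "\<And>t. 0 \<le> t \<Longrightarrow> (Z has_real_derivative v t - k t * Z t) (at t within {0..})"
    and t: "0 \<le> t"
  shows "Z t = Z 0 * fund t + res v t"
proof -
  define D where "D s = Z s / fund s - integral {0..s} (\<lambda>r. v r / fund r)" for s
  have "(D has_real_derivative 0) (at s within {0..})" if s: "0 \<le> s" for s
  proof -
    have "((\<lambda>s. Z s / fund s - integral {0..s} (\<lambda>r. v r / fund r)) has_real_derivative
       ((v s - k s * Z s) * fund s - (- k s * fund s) * Z s) / (fund s) ^ Suc (Suc 0) - v s / fund s) (at s within {0..})"
      using s fund_pos[of s] by (intro DERIV_diff DERIV_quotient Z fund_deriv
          has_real_derivative_integral_Ici continuous_on_div_fund v) auto
    then show ?thesis
      unfolding D_def[abs_def] using fund_pos[of s] by (simp add: field_simps power2_eq_square)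
  qed
  then have "D t = D 0"
    by (rule constant_if_deriv_zero_Ici[OF _ t])
  then show ?thesis
    using fund_pos[of t] by (simp add: D_def fund_0 res_def field_simps)
qed

lemma res_eqI:
  assumes "continuous_on {0..} v"
    and "\<And>t. 0 \<le> t \<Longrightarrow> (Z has_real_derivative v t - k t * Z t) (at t within {0..})"
    and "Z 0 = 0" "0 \<le> t"
  shows "res v t = Z t"
  using res_unique[OF assms(1,2,4)] assms(3) by simp

lemma res_add:
  "continuous_on {0..} v \<Longrightarrow> continuous_on {0..} w \<Longrightarrow> 0 \<le> t \<Longrightarrow>
    res (\<lambda>s. v s + w s) t = res v t + res w t"
  unfolding res_def add_divide_distrib
  by (subst integral_add) (auto intro!: integrable_on_Icc_if_continuous_Ici continuous_on_div_fund
      simp: distrib_left)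

lemma res_diff:
  "continuous_on {0..} v \<Longrightarrow> continuous_on {0..} w \<Longrightarrow> 0 \<le> t \<Longrightarrow>
    res (\<lambda>s. v s - w s) t = res v t - res w t"
  unfolding res_def diff_divide_distrib
  by (subst integral_diff) (auto intro!: integrable_on_Icc_if_continuous_Ici continuous_on_div_fund
      simp: right_diff_distrib)

lemma res_cmult: "res (\<lambda>s. c * v s) t = c * res v t"
  unfolding res_def times_divide_eq_right[symmetric] integral_mult_right by simp

lemma res_cong: "(\<And>s. 0 \<le> s \<Longrightarrow> v s = w s) \<Longrightarrow> 0 \<le> t \<Longrightarrow> res v t = res w t"
  unfolding res_def by (intro arg_cong2[where f="(*)"] refl integral_cong) auto

lemma res_nonneg:
  assumes "continuous_on {0..} v" "\<And>s. 0 \<le> s \<Longrightarrow> 0 \<le> v s" "0 \<le> t"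
  shows "0 \<le> res v t"
  unfolding res_def using fund_pos assms
  by (intro mult_nonneg_nonneg integral_nonneg integrable_on_Icc_if_continuous_Ici continuous_on_div_fund)
    (auto simp: less_imp_le)

lemma abs_res_le:
  assumes v: "continuous_on {0..} v" and t: "0 \<le> t"
  shows "\<bar>res v t\<bar> \<le> res (\<lambda>s. \<bar>v s\<bar>) t"
proof -
  have "\<bar>integral {0..t} (\<lambda>s. v s / fund s)\<bar> \<le> integral {0..t} (\<lambda>s. \<bar>v s\<bar> / fund s)"
  proof -
    have "continuous_on {0..} (\<lambda>s. \<bar>v s\<bar> / fund s)"
      by (intro continuous_on_div_fund continuous_intros v)
    then show ?thesis
      using integral_norm_bound_integral[of "\<lambda>s. v s / fund s" "{0..t}" "\<lambda>s. \<bar>v s\<bar> / fund s"]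
        integrable_on_Icc_if_continuous_Ici[OF continuous_on_div_fund[OF v]] fund_pos
        integrable_on_Icc_if_continuous_Ici[of "\<lambda>s. \<bar>v s\<bar> / fund s"]
      by (auto simp: abs_divide less_imp_le)
  qed
  then show ?thesis
    unfolding res_def using fund_pos[of t] by (simp add: abs_mult)
qed

lemma abs_res_le_kernel:
  obtains K where "0 < K"
    "\<And>v t. continuous_on {0..} v \<Longrightarrow> 0 \<le> t \<Longrightarrow>
      \<bar>res v t\<bar> \<le> K * integral {0..t} (\<lambda>s. exp (- (\<kappa> / 2) * (t - s)) * \<bar>v s\<bar>)"
proof -
  obtain K where K: "0 < K" "\<And>s t. 0 \<le> s \<Longrightarrow> s \<le> t \<Longrightarrow> fund t \<le> K * exp (- (\<kappa> / 2) * (t - s)) * fund s"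
    using fund_ratio_le by blast
  have "\<bar>res v t\<bar> \<le> K * integral {0..t} (\<lambda>s. exp (- (\<kappa> / 2) * (t - s)) * \<bar>v s\<bar>)"
    if v: "continuous_on {0..} v" and t: "0 \<le> t" for v t
  proof -
    have abs_v: "continuous_on {0..} (\<lambda>s. \<bar>v s\<bar>)"
      using v by (intro continuous_intros)
    have "\<bar>res v t\<bar> \<le> fund t * integral {0..t} (\<lambda>s. \<bar>v s\<bar> / fund s)"
      using abs_res_le[OF v t] by (simp add: res_def)
    also have "\<dots> = integral {0..t} (\<lambda>s. fund t * (\<bar>v s\<bar> / fund s))"
      by (simp only: integral_mult_right)
    also have "\<dots> \<le> integral {0..t} (\<lambda>s. K * (exp (- (\<kappa> / 2) * (t - s)) * \<bar>v s\<bar>))"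
    proof (rule integral_le)
      show "(\<lambda>s. fund t * (\<bar>v s\<bar> / fund s)) integrable_on {0..t}"
        "(\<lambda>s. K * (exp (- (\<kappa> / 2) * (t - s)) * \<bar>v s\<bar>)) integrable_on {0..t}"
        by (intro integrable_on_Icc_if_continuous_Ici continuous_intros continuous_on_div_fund abs_v; simp)+
      fix s
      assume s: "s \<in> {0..t}"
      then have "fund t / fund s \<le> K * exp (- (\<kappa> / 2) * (t - s))"
        using K(2)[of s t] fund_pos[of s] by (simp add: divide_le_eq)
      then have "fund t / fund s * \<bar>v s\<bar> \<le> K * exp (- (\<kappa> / 2) * (t - s)) * \<bar>v s\<bar>"
        by (rule mult_right_mono) simp
      then show "fund t * (\<bar>v s\<bar> / fund s) \<le> K * (exp (- (\<kappa> / 2) * (t - s)) * \<bar>v s\<bar>)"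
        by (simp add: field_simps)
    qed
    finally show ?thesis
      by simp
  qed
  with K(1) show ?thesis
    using that by blast
qed

lemma res_bounded:
  assumes v: "continuous_on {0..} v" and "bounded (v ` {0..})"
  shows "bounded (res v ` {0..})"
proof -
  obtain M where M: "\<And>s. 0 \<le> s \<Longrightarrow> \<bar>v s\<bar> \<le> M"
    using assms(2) by (auto simp: bounded_iff)
  obtain K where K: "0 < K" "\<And>v t. continuous_on {0..} v \<Longrightarrow> 0 \<le> t \<Longrightarrow>
      \<bar>res v t\<bar> \<le> K * integral {0..t} (\<lambda>s. exp (- (\<kappa> / 2) * (t - s)) * \<bar>v s\<bar>)"
    using abs_res_le_kernel by blast
  have "\<bar>res v t\<bar> \<le> K * (M / (\<kappa> / 2))" if "0 \<le> t" for t
  proof -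
    have "integral {0..t} (\<lambda>s. exp (- (\<kappa> / 2) * (t - s)) * \<bar>v s\<bar>) \<le> M * exp (- (\<kappa> / 2) * (t - t)) / (\<kappa> / 2)"
      using M that \<kappa>_pos by (intro kernel_integral_le v) auto
    then have "K * integral {0..t} (\<lambda>s. exp (- (\<kappa> / 2) * (t - s)) * \<bar>v s\<bar>) \<le> K * (M / (\<kappa> / 2))"
      using K(1) by (intro mult_left_mono) auto
    with K(2)[OF v that] show ?thesis
      by linarith
  qed
  then show ?thesis
    unfolding bounded_iff by force
qed

lemma res_tendsto_0:
  assumes v: "continuous_on {0..} v" and lim: "(v \<longlongrightarrow> 0) at_top"
  shows "(res v \<longlongrightarrow> 0) at_top"
proof -
  obtain K where K: "0 < K" "\<And>v t. continuous_on {0..} v \<Longrightarrow> 0 \<le> t \<Longrightarrow>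
      \<bar>res v t\<bar> \<le> K * integral {0..t} (\<lambda>s. exp (- (\<kappa> / 2) * (t - s)) * \<bar>v s\<bar>)"
    using abs_res_le_kernel by blast
  show ?thesis
  proof (rule Lim_null_comparison)
    show "\<forall>\<^sub>F t in at_top. norm (res v t) \<le> K * integral {0..t} (\<lambda>s. exp (- (\<kappa> / 2) * (t - s)) * \<bar>v s\<bar>)"
      using eventually_ge_at_top[of 0] by eventually_elim (simp only: real_norm_def K(2)[OF v])
    show "((\<lambda>t. K * integral {0..t} (\<lambda>s. exp (- (\<kappa> / 2) * (t - s)) * \<bar>v s\<bar>)) \<longlongrightarrow> 0) at_top"
      using \<kappa>_pos by (intro tendsto_mult_right_zero kernel_integral_tendsto_0 v lim) simp
  qed
qed

text \<open>The limiting coefficients are those of the periodic solution of \<open>Z' + \<kappa> Z = trig_poly \<omega> a b\<close>.\<close>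

lemma res_trig_poly_asymptotic:
  assumes v: "continuous_on {0..} v" and lim: "((\<lambda>t. v t - trig_poly \<omega> a b t) \<longlongrightarrow> 0) at_top"
  obtains a' b' where "\<kappa> * a' + \<omega> * b' = a" "\<kappa> * b' - \<omega> * a' = b"
    "((\<lambda>t. res v t - trig_poly \<omega> a' b' t) \<longlongrightarrow> 0) at_top"
proof -
  obtain a' b' where eq1: "\<kappa> * a' + \<omega> * b' = a" and eq2: "\<kappa> * b' - \<omega> * a' = b"
    using linear_system_2x2_solvable[OF \<kappa>_pos] by blast
  define w where "w t = (v t - trig_poly \<omega> a b t) + (\<kappa> - k t) * trig_poly \<omega> a' b' t" for t
  have w_cont: "continuous_on {0..} w"
    unfolding w_def[abs_def] by (intro continuous_intros v continuous_on_trig_poly k_cont)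
  have "((\<lambda>t. \<kappa> - k t) \<longlongrightarrow> 0) at_top"
    using tendsto_diff[OF tendsto_const k_tendsto, of \<kappa>] by simp
  then have "((\<lambda>t. trig_poly \<omega> a' b' t * (\<kappa> - k t)) \<longlongrightarrow> 0) at_top"
    by (intro tendsto_zero_mult_Bfun Bfun_trig_poly)
  from tendsto_add[OF lim this] have w_lim: "(w \<longlongrightarrow> 0) at_top"
    unfolding w_def[abs_def] by (simp add: mult.commute)
  define D where "D t = res v t - trig_poly \<omega> a' b' t" for t
  have D_deriv: "(D has_real_derivative w t - k t * D t) (at t within {0..})" if "0 \<le> t" for t
  proof -
    have "(D has_real_derivative (v t - k t * res v t) - \<omega> * (b' * cos (\<omega> * t) - a' * sin (\<omega> * t)))
        (at t within {0..})"
      unfolding D_def[abs_def] by (intro DERIV_diff res_deriv v that trig_poly_deriv)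
    then show ?thesis
    proof (rule DERIV_cong)
      have "trig_poly \<omega> a b t = \<kappa> * trig_poly \<omega> a' b' t + \<omega> * (b' * cos (\<omega> * t) - a' * sin (\<omega> * t))"
        unfolding trig_poly_def eq1[symmetric] eq2[symmetric] by (simp add: algebra_simps)
      then show "v t - k t * res v t - \<omega> * (b' * cos (\<omega> * t) - a' * sin (\<omega> * t)) = w t - k t * D t"
        unfolding w_def D_def by (simp add: algebra_simps)
    qed
  qed
  have "\<forall>\<^sub>F t in at_top. D 0 * fund t + res w t = D t"
    using eventually_ge_at_top[of 0]
    by eventually_elim (rule res_unique[OF w_cont D_deriv, symmetric])
  with tendsto_add[OF tendsto_mult_right_zero[OF fund_tendsto_0] res_tendsto_0[OF w_cont w_lim]]
  have "(D \<longlongrightarrow> 0) at_top"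
    by (auto intro: Lim_transform_eventually)
  then have "((\<lambda>t. res v t - trig_poly \<omega> a' b' t) \<longlongrightarrow> 0) at_top"
    by (simp add: D_def[abs_def])
  with eq1 eq2 show ?thesis
    by (rule that)
qed

text \<open>Integrating \<open>(res v)' = v - k res v\<close> over a tail where \<open>k \<ge> \<kappa>/2\<close>.\<close>

lemma integral_res_tail_le:
  assumes v: "continuous_on {0..} v" and nonneg: "\<And>s. 0 \<le> s \<Longrightarrow> 0 \<le> v s"
    and t0: "0 \<le> t0" "\<And>r. t0 \<le> r \<Longrightarrow> \<kappa> / 2 \<le> k r" and T: "t0 \<le> T"
  shows "\<kappa> / 2 * integral {t0..T} (res v) \<le> integral {t0..T} v + res v t0"
proof -
  have int: "g integrable_on {t0..T}" if "continuous_on {0..} g" for g :: "real \<Rightarrow> real"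
    using that t0(1) by (rule integrable_on_Icc_if_continuous_Ici)
  have "((\<lambda>t. v t - k t * res v t) has_integral res v T - res v t0) {t0..T}"
    using t0(1) T by (intro has_integral_if_deriv_Ici res_deriv v) auto
  then have "integral {t0..T} v - integral {t0..T} (\<lambda>t. k t * res v t) = res v T - res v t0"
    using integral_diff[OF int[OF v] int, of "\<lambda>t. k t * res v t"]
    by (simp add: integral_unique k_cont res_cont[OF v] continuous_intros)
  moreover have "integral {t0..T} (\<lambda>t. \<kappa> / 2 * res v t) \<le> integral {t0..T} (\<lambda>t. k t * res v t)"
  proof (rule integral_le)
    show "(\<lambda>t. \<kappa> / 2 * res v t) integrable_on {t0..T}" "(\<lambda>t. k t * res v t) integrable_on {t0..T}"
      by (intro int continuous_intros res_cont v k_cont)+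
    show "\<kappa> / 2 * res v t \<le> k t * res v t" if "t \<in> {t0..T}" for t
      using that t0 by (intro mult_right_mono res_nonneg[OF v nonneg]) auto
  qed
  moreover have "0 \<le> res v T"
    using t0(1) T by (intro res_nonneg[OF v nonneg]) auto
  ultimately show ?thesis
    by simp
qed

lemma res_cont_L1_nonneg:
  assumes L1: "cont_L1 v" and nonneg: "\<And>s. 0 \<le> s \<Longrightarrow> 0 \<le> v s"
  shows "cont_L1 (res v)"
proof -
  obtain B where B: "\<And>T. 0 \<le> T \<Longrightarrow> integral {0..T} (\<lambda>t. \<bar>v t\<bar>) \<le> B"
    and v: "continuous_on {0..} v"
    using L1 unfolding cont_L1_def by auto
  obtain t0 where t0: "0 \<le> t0" "\<And>r. t0 \<le> r \<Longrightarrow> \<kappa> / 2 \<le> k r"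
    using k_eventually_ge by blast
  have "integral {t0..T} (res v) \<le> (B + res v t0) / (\<kappa> / 2)" if T: "t0 \<le> T" for T
  proof -
    have "integral {t0..T} v = integral {t0..T} (\<lambda>t. \<bar>v t\<bar>)"
      by (rule integral_cong) (use nonneg t0 in auto)
    also have "\<dots> \<le> integral {0..T} (\<lambda>t. \<bar>v t\<bar>)"
      by (rule integral_subset_le) (use v t0 T in
          \<open>auto intro!: integrable_on_Icc_if_continuous_Ici continuous_intros\<close>)
    finally have "\<kappa> / 2 * integral {t0..T} (res v) \<le> B + res v t0"
      using integral_res_tail_le[OF v nonneg t0 T] B[of T] T t0(1) by simp
    then show ?thesis
      using \<kappa>_pos by (simp add: field_simps)
  qed
  then show ?thesis
    by (intro cont_L1_nonneg_if_tail_bounded[OF res_cont[OF v] res_nonneg[OF v nonneg] t0(1)])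
qed

lemma res_cont_L1:
  assumes "cont_L1 v"
  shows "cont_L1 (res v)"
proof (rule cont_L1_dominated)
  have v: "continuous_on {0..} v"
    using assms unfolding cont_L1_def by auto
  show "continuous_on {0..} (res v)"
    by (rule res_cont[OF v])
  show "\<bar>res v t\<bar> \<le> res (\<lambda>s. \<bar>v s\<bar>) t" if "0 \<le> t" for t
    by (rule abs_res_le[OF v that])
  show "cont_L1 (res (\<lambda>s. \<bar>v s\<bar>))"
    by (rule res_cont_L1_nonneg[OF cont_L1_abs[OF assms]]) simp
qed

lemma mult_res:
  assumes q: "\<And>t. 0 \<le> t \<Longrightarrow> (q has_real_derivative q' t) (at t within {0..})"
    and q'_cont: "continuous_on {0..} q'" and v: "continuous_on {0..} v" and t: "0 \<le> t"
  shows "q t * res v t = res (\<lambda>s. q' s * res v s + q s * v s) t"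
proof -
  have "((\<lambda>s. q s * res v s) has_real_derivative
      (q' s * res v s + q s * v s) - k s * (q s * res v s)) (at s within {0..})" if s: "0 \<le> s" for s
    using DERIV_mult[OF q[OF s] res_deriv[OF v s]] by (simp add: algebra_simps)
  moreover have "continuous_on {0..} (\<lambda>s. q' s * res v s + q s * v s)"
    using continuous_on_Ici_if_deriv[OF q] by (intro continuous_intros q'_cont v)
  ultimately show ?thesis
    using res_unique[of "\<lambda>s. q' s * res v s + q s * v s" "\<lambda>s. q s * res v s" t] t by (simp add: res_0)
qed

end

section \<open>The damped oscillator\<close>

lemma y1fun_eq_exp: "y1fun \<omega> h t = exp (- (\<omega>^2) * t) * integral {0..t} (\<lambda>s. exp (\<omega>^2 * s) * h s)"
  unfolding y1fun_def integral_mult_right[symmetric]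
  by (intro integral_cong) (simp add: algebra_simps flip: exp_add)

lemma y2fun_eq_y1fun: "y2fun \<omega> f = y1fun \<omega> (y1fun \<omega> f)"
  by (rule ext) (simp only: y2fun_def y1fun_def)

locale damping =
  fixes \<omega> :: real and p p' :: "real \<Rightarrow> real"
  assumes omega_pos: "0 < \<omega>"
    and p_deriv: "\<And>t. 0 \<le> t \<Longrightarrow> (p has_real_derivative p' t) (at t within {0..})"
    and p'_cont: "continuous_on {0..} p'"
    and p_pos: "\<And>t. 0 \<le> t \<Longrightarrow> 0 < p t"
    and p'_neg: "\<And>t. 0 \<le> t \<Longrightarrow> p' t < 0"
    and p_sq_int: "(\<lambda>t. (p t)^2) integrable_on {0..}"
begin

declare p'_cont [continuous_intros]

lemma p_cont [continuous_intros]: "continuous_on {0..} p"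
  by (rule continuous_on_Ici_if_deriv[OF p_deriv])

lemma p_antimono:
  assumes "0 \<le> s" "s \<le> t"
  shows "p t \<le> p s"
proof -
  have "((\<lambda>r. - p' r) has_integral - (p t - p s)) {s..t}"
    using assms by (intro has_integral_neg has_integral_if_deriv_Ici p_deriv)
  then have "0 \<le> - (p t - p s)"
  proof (rule has_integral_nonneg)
    show "0 \<le> - p' r" if "r \<in> {s..t}" for r
      using p'_neg[of r] that assms by simp
  qed
  then show ?thesis
    by simp
qed

lemma p_tendsto_0: "(p \<longlongrightarrow> 0) at_top"
proof -
  have small: "\<exists>t\<ge>0. p t < e" if e: "0 < e" for e
  proof (rule ccontr)
    assume "\<not> ?thesis"
    then have ge: "\<And>t. 0 \<le> t \<Longrightarrow> e \<le> p t"
      by force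
    define I where "I = integral {0..} (\<lambda>t. (p t)^2)"
    define T where "T = (\<bar>I\<bar> + 1) / e^2"
    have "0 \<le> T"
      using e by (simp add: T_def)
    have sq_int: "(\<lambda>t. (p t)^2) integrable_on {0..T}"
      by (intro integrable_on_Icc_if_continuous_Ici continuous_intros) auto
    have "integral {0..T} (\<lambda>t. e^2) \<le> integral {0..T} (\<lambda>t. (p t)^2)"
      by (rule integral_le) (use ge e sq_int in \<open>auto intro!: power_mono\<close>)
    also have "\<dots> \<le> I"
      unfolding I_def by (rule integral_subset_le) (use sq_int p_sq_int in auto)
    finally have "T * e^2 \<le> I"
      using \<open>0 \<le> T\<close> by simp
    moreover have "T * e^2 = \<bar>I\<bar> + 1"
      using e by (simp add: T_def)
    ultimately show False
      by linarith
  qed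
  show ?thesis
  proof (rule tendstoI)
    fix e :: real
    assume "0 < e"
    then obtain t0 where t0: "0 \<le> t0" "p t0 < e"
      using small by blast
    show "\<forall>\<^sub>F t in at_top. dist (p t) 0 < e"
      using eventually_ge_at_top[of t0]
    proof eventually_elim
      case (elim t)
      then show ?case
        using p_antimono[OF t0(1) elim] p_pos[of t] t0 by (simp add: dist_real_def)
    qed
  qed
qed

lemma cont_L1_p': "cont_L1 p'"
proof -
  have "integral {0..T} (\<lambda>t. \<bar>p' t\<bar>) \<le> p 0" if "0 \<le> T" for T
  proof -
    have "integral {0..T} (\<lambda>t. \<bar>p' t\<bar>) = integral {0..T} (\<lambda>t. - p' t)"
      by (rule integral_cong) (use p'_neg in \<open>auto simp: abs_if\<close>)
    also have "\<dots> = - (p T - p 0)"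
      using that by (intro integral_unique has_integral_neg has_integral_if_deriv_Ici p_deriv) auto
    finally show ?thesis
      using p_pos[OF that] by simp
  qed
  then show ?thesis
    using p'_cont unfolding cont_L1_def by auto
qed

lemma cont_L1_p_sq: "cont_L1 (\<lambda>t. (p t)^2)"
proof -
  have "integral {0..T} (\<lambda>t. \<bar>(p t)^2\<bar>) \<le> integral {0..} (\<lambda>t. (p t)^2)" if "0 \<le> T" for T
    by (simp, rule integral_subset_le)
      (auto intro!: p_sq_int integrable_on_Icc_if_continuous_Ici continuous_intros)
  then show ?thesis
    unfolding cont_L1_def by (auto intro!: continuous_intros)
qed

definition k :: "real \<Rightarrow> real" where
  "k t = \<omega>^2 - p t / 2"

lemma k_deriv: "0 \<le> t \<Longrightarrow> (k has_real_derivative - p' t / 2) (at t within {0..})"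
  unfolding k_def[abs_def] by (rule derivative_eq_intros p_deriv refl | simp)+

end

sublocale damping \<subseteq> relaxation k "\<omega>^2"
proof
  show "continuous_on {0..} k"
    unfolding k_def[abs_def] by (intro continuous_intros) auto
  show "(k \<longlongrightarrow> \<omega>^2) at_top"
    unfolding k_def[abs_def] using tendsto_diff[OF tendsto_const tendsto_divide[OF p_tendsto_0 tendsto_const]]
    by fastforce
  show "0 < \<omega>^2"
    using omega_pos by simp
qed

context damping
begin

lemma Afun_pos: "0 < Afun p t"
  by (simp add: Afun_def)

lemma Afun_deriv:
  assumes "0 \<le> t"
  shows "(Afun p has_real_derivative p t / 2 * Afun p t) (at t within {0..})"
proof -
  have "((\<lambda>t. exp ((1/2) * integral {0..t} p)) has_real_derivative
      exp ((1/2) * integral {0..t} p) * ((1/2) * p t)) (at t within {0..})"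
    using has_real_derivative_integral_Ici[OF p_cont assms] by (intro derivative_eq_intros) auto
  then show ?thesis
    unfolding Afun_def[abs_def] by (simp add: mult.commute)
qed

lemma Afun_cont [continuous_intros]: "continuous_on {0..} (Afun p)"
  by (rule continuous_on_Ici_if_deriv[OF Afun_deriv])

lemma fund_eq:
  assumes "0 \<le> t"
  shows "fund t = Afun p t * exp (- (\<omega>^2) * t)"
proof -
  have "integral {0..t} k = integral {0..t} (\<lambda>s. \<omega>^2) - integral {0..t} (\<lambda>s. p s / 2)"
    unfolding k_def[abs_def] using assms
    by (intro integral_diff integrable_on_Icc_if_continuous_Ici continuous_intros) auto
  then have "integral {0..t} k = \<omega>^2 * t - integral {0..t} p / 2"
    using assms by simp
  then show ?thesis
    by (simp add: fund_def Afun_def flip: exp_add)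
qed

lemma Afun_mult_y1fun:
  assumes "0 \<le> t"
  shows "Afun p t * y1fun \<omega> h t = res (\<lambda>s. Afun p s * h s) t"
proof -
  have "integral {0..t} (\<lambda>s. Afun p s * h s / fund s) = integral {0..t} (\<lambda>s. exp (\<omega>^2 * s) * h s)"
  proof (rule integral_cong)
    fix s
    assume "s \<in> {0..t}"
    moreover have "Afun p s \<noteq> 0"
      using Afun_pos[of s] by simp
    ultimately show "Afun p s * h s / fund s = exp (\<omega>^2 * s) * h s"
      by (simp add: fund_eq exp_minus field_simps)
  qed
  then show ?thesis
    using assms by (simp add: res_def fund_eq y1fun_eq_exp)
qed

end

locale damped_oscillator = damping +
  fixes f x x' :: "real \<Rightarrow> real"
  assumes x_deriv: "\<And>t. 0 \<le> t \<Longrightarrow> (x has_real_derivative x' t) (at t within {0..})"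
    and x'_eq: "\<And>t. 0 \<le> t \<Longrightarrow> ((\<lambda>s. f s - p s * x' s - \<omega>^2 * x s) has_integral x' t) {0..t}"
    and x_0: "x 0 = 0"
begin

lemma x_cont [continuous_intros]: "continuous_on {0..} x"
  by (rule continuous_on_Ici_if_deriv[OF x_deriv])

lemma x'_cont [continuous_intros]: "continuous_on {0..} x'"
  by (rule continuous_on_indefinite_integral_Ici[OF x'_eq])

text \<open>Integrating \<open>x'' = f - p x' - \<omega>\<^sup>2 x\<close> by parts against \<open>e\<^bsup>\<omega>\<^sup>2 s\<^esup>\<close>.\<close>

lemma y1fun_eq:
  assumes t: "0 \<le> t"
  shows "y1fun \<omega> f t = x' t - \<omega>^2 * y1fun \<omega> x' t + y1fun \<omega> (\<lambda>s. p s * x' s + \<omega>^2 * x s) t"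
proof -
  let ?g = "\<lambda>s. f s - p s * x' s - \<omega>^2 * x s"
  let ?h = "\<lambda>s. exp (\<omega>^2 * s) * (p s * x' s + \<omega>^2 * x s)"
  have exp_deriv: "((\<lambda>s. exp (\<omega>^2 * s)) has_real_derivative \<omega>^2 * exp (\<omega>^2 * s)) (at s within {0..})" for s
    by (rule derivative_eq_intros refl | simp)+
  have "((\<lambda>s. exp (\<omega>^2 * s) * ?g s) has_integral
      exp (\<omega>^2 * t) * x' t - integral {0..t} (\<lambda>s. \<omega>^2 * exp (\<omega>^2 * s) * x' s)) {0..t}"
    by (rule integration_by_parts_monotone_Ici[OF x'_eq exp_deriv _ _ t]) (auto intro!: continuous_intros mult_left_mono)
  moreover have "(?h has_integral integral {0..t} ?h) {0..t}"
    by (intro integrable_integral integrable_on_Icc_if_continuous_Ici continuous_intros) auto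
  ultimately have "((\<lambda>s. exp (\<omega>^2 * s) * ?g s + ?h s) has_integral
      exp (\<omega>^2 * t) * x' t - \<omega>^2 * integral {0..t} (\<lambda>s. exp (\<omega>^2 * s) * x' s) + integral {0..t} ?h) {0..t}"
    by (simp add: has_integral_add mult.assoc)
  moreover have "(\<lambda>s. exp (\<omega>^2 * s) * ?g s + ?h s) = (\<lambda>s. exp (\<omega>^2 * s) * f s)"
    by (simp add: algebra_simps)
  ultimately have "integral {0..t} (\<lambda>s. exp (\<omega>^2 * s) * f s)
      = exp (\<omega>^2 * t) * x' t - \<omega>^2 * integral {0..t} (\<lambda>s. exp (\<omega>^2 * s) * x' s) + integral {0..t} ?h"
    by (simp add: integral_unique)
  then have "y1fun \<omega> f t = exp (- (\<omega>^2) * t) *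
      (exp (\<omega>^2 * t) * x' t - \<omega>^2 * integral {0..t} (\<lambda>s. exp (\<omega>^2 * s) * x' s) + integral {0..t} ?h)"
    by (simp add: y1fun_eq_exp)
  also have "\<dots> = x' t - \<omega>^2 * y1fun \<omega> x' t + y1fun \<omega> (\<lambda>s. p s * x' s + \<omega>^2 * x s) t"
  proof -
    have "exp (- (\<omega>^2) * t) * exp (\<omega>^2 * t) = 1"
      by (simp flip: exp_add)
    then show ?thesis
      by (simp add: y1fun_eq_exp algebra_simps)
  qed
  finally show ?thesis .
qed

definition u :: "real \<Rightarrow> real" where
  "u t = Afun p t * x t"

definition X :: "real \<Rightarrow> real" where
  "X t = Afun p t * x' t"

definition V1 :: "real \<Rightarrow> real" where
  "V1 = res u"

definition V2 :: "real \<Rightarrow> real" where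
  "V2 = res V1"

lemma u_cont [continuous_intros]: "continuous_on {0..} u"
  unfolding u_def[abs_def] by (intro continuous_intros)

lemma X_cont [continuous_intros]: "continuous_on {0..} X"
  unfolding X_def[abs_def] by (intro continuous_intros)

lemma V1_cont [continuous_intros]: "continuous_on {0..} V1"
  unfolding V1_def by (intro continuous_intros)

lemma V2_cont [continuous_intros]: "continuous_on {0..} V2"
  unfolding V2_def by (intro continuous_intros)

lemma u_deriv: "0 \<le> t \<Longrightarrow> (u has_real_derivative (X t + \<omega>^2 * u t) - k t * u t) (at t within {0..})"
  using DERIV_mult[OF Afun_deriv x_deriv] unfolding u_def[abs_def]
  by (simp add: X_def u_def k_def algebra_simps)

lemma u_eq_res: "0 \<le> t \<Longrightarrow> u t = res (\<lambda>s. X s + \<omega>^2 * u s) t"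
  by (rule res_eqI[symmetric, OF _ u_deriv]) (auto intro!: continuous_intros simp: u_def x_0)

lemma res_X: "0 \<le> t \<Longrightarrow> res X t = u t - \<omega>^2 * V1 t"
  using u_eq_res res_add[of X "\<lambda>s. \<omega>^2 * u s"] by (simp add: V1_def res_cmult continuous_intros)

lemma p_mult_res: "continuous_on {0..} v \<Longrightarrow> 0 \<le> t \<Longrightarrow> p t * res v t = res (\<lambda>s. p' s * res v s + p s * v s) t"
  by (rule mult_res[OF p_deriv p'_cont])

lemma res_p_mult_X:
  assumes t: "0 \<le> t"
  shows "res (\<lambda>s. p s * X s) t = p t * u t - res (\<lambda>s. p' s * u s) t - \<omega>^2 * res (\<lambda>s. p s * u s) t"
proof -
  have "p t * u t = p t * res (\<lambda>s. X s + \<omega>^2 * u s) t"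
    using u_eq_res[OF t] by simp
  also have "\<dots> = res (\<lambda>s. p' s * res (\<lambda>s. X s + \<omega>^2 * u s) s + p s * (X s + \<omega>^2 * u s)) t"
    by (rule p_mult_res[OF _ t]) (intro continuous_intros)
  also have "\<dots> = res (\<lambda>s. p' s * u s + p s * X s + \<omega>^2 * (p s * u s)) t"
    by (rule res_cong[OF _ t]) (simp add: u_eq_res[symmetric], simp add: algebra_simps)
  also have "\<dots> = res (\<lambda>s. p' s * u s + p s * X s) t + res (\<lambda>s. \<omega>^2 * (p s * u s)) t"
    by (rule res_add[OF _ _ t]) (intro continuous_intros)+
  also have "\<dots> = res (\<lambda>s. p' s * u s) t + res (\<lambda>s. p s * X s) t + \<omega>^2 * res (\<lambda>s. p s * u s) t"
    by (subst res_add[OF _ _ t]) (intro continuous_intros, intro continuous_intros, simp add: res_cmult)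
  finally show ?thesis
    by simp
qed

lemma Afun_mult_y1fun_expansion:
  assumes s: "0 \<le> s"
  shows "Afun p s * y1fun \<omega> f s = X s - \<omega>^2 * u s + (\<omega>^4 + \<omega>^2) * V1 s + p s * u s
    - res (\<lambda>r. p' r * u r) s - \<omega>^2 * res (\<lambda>r. p r * u r) s"
proof -
  have "Afun p s * y1fun \<omega> (\<lambda>r. p r * x' r + \<omega>^2 * x r) s = res (\<lambda>r. p r * X r + \<omega>^2 * u r) s"
    unfolding Afun_mult_y1fun[OF s] by (rule res_cong[OF _ s]) (simp add: X_def u_def algebra_simps)
  also have "\<dots> = res (\<lambda>r. p r * X r) s + \<omega>^2 * V1 s"
    by (subst res_add[OF _ _ s]) (intro continuous_intros, intro continuous_intros, simp add: res_cmult V1_def)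
  finally have "Afun p s * y1fun \<omega> (\<lambda>r. p r * x' r + \<omega>^2 * x r) s = res (\<lambda>r. p r * X r) s + \<omega>^2 * V1 s" .
  moreover have "Afun p s * y1fun \<omega> x' s = res X s"
    unfolding Afun_mult_y1fun[OF s] X_def[abs_def] ..
  ultimately have "Afun p s * y1fun \<omega> f s = X s - \<omega>^2 * res X s + (res (\<lambda>r. p r * X r) s + \<omega>^2 * V1 s)"
    by (simp add: y1fun_eq[OF s] X_def algebra_simps)
  then show ?thesis
    unfolding res_X[OF s] res_p_mult_X[OF s] by (simp add: algebra_simps power4_eq_xxxx power2_eq_square)
qed

lemma V1_deriv: "0 \<le> t \<Longrightarrow> (V1 has_real_derivative u t - k t * V1 t) (at t within {0..})"
  unfolding V1_def by (rule res_deriv[OF u_cont])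

lemma V2_deriv: "0 \<le> t \<Longrightarrow> (V2 has_real_derivative V1 t - k t * V2 t) (at t within {0..})"
  unfolding V2_def by (rule res_deriv[OF V1_cont])

lemma Afun_mult_y2fun_expansion:
  assumes t: "0 \<le> t"
  shows "Afun p t * y2fun \<omega> f t = res X t - \<omega>^2 * V1 t + (\<omega>^4 + \<omega>^2) * V2 t + res (\<lambda>s. p s * u s) t
    - res (res (\<lambda>s. p' s * u s)) t - \<omega>^2 * res (res (\<lambda>s. p s * u s)) t"
proof -
  have "Afun p t * y2fun \<omega> f t = res (\<lambda>s. Afun p s * y1fun \<omega> f s) t"
    unfolding y2fun_eq_y1fun by (rule Afun_mult_y1fun[OF t])
  also have "\<dots> = res (\<lambda>s. X s - \<omega>^2 * u s + (\<omega>^4 + \<omega>^2) * V1 s + p s * u s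
    - res (\<lambda>r. p' r * u r) s - \<omega>^2 * res (\<lambda>r. p r * u r) s) t"
    by (rule res_cong[OF Afun_mult_y1fun_expansion t])
  also have "\<dots> = res X t - \<omega>^2 * V1 t + (\<omega>^4 + \<omega>^2) * V2 t + res (\<lambda>s. p s * u s) t
    - res (res (\<lambda>s. p' s * u s)) t - \<omega>^2 * res (res (\<lambda>s. p s * u s)) t"
  proof (rule res_eqI[OF _ _ _ t])
    show "continuous_on {0..} (\<lambda>s. X s - \<omega>^2 * u s + (\<omega>^4 + \<omega>^2) * V1 s + p s * u s
      - res (\<lambda>r. p' r * u r) s - \<omega>^2 * res (\<lambda>r. p r * u r) s)"
      by (intro continuous_intros)
    fix s :: real
    assume s: "0 \<le> s"
    have "((\<lambda>t. res X t - \<omega>^2 * V1 t + (\<omega>^4 + \<omega>^2) * V2 t + res (\<lambda>s. p s * u s) t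
        - res (res (\<lambda>s. p' s * u s)) t - \<omega>^2 * res (res (\<lambda>s. p s * u s)) t) has_real_derivative
        (X s - k s * res X s) - \<omega>^2 * (u s - k s * V1 s) + (\<omega>^4 + \<omega>^2) * (V1 s - k s * V2 s)
        + (p s * u s - k s * res (\<lambda>s. p s * u s) s)
        - (res (\<lambda>s. p' s * u s) s - k s * res (res (\<lambda>s. p' s * u s)) s)
        - \<omega>^2 * (res (\<lambda>s. p s * u s) s - k s * res (res (\<lambda>s. p s * u s)) s)) (at s within {0..})"
      by (intro DERIV_add DERIV_diff DERIV_cmult res_deriv V1_deriv V2_deriv continuous_intros s)
    then show "((\<lambda>t. res X t - \<omega>^2 * V1 t + (\<omega>^4 + \<omega>^2) * V2 t + res (\<lambda>s. p s * u s) t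
        - res (res (\<lambda>s. p' s * u s)) t - \<omega>^2 * res (res (\<lambda>s. p s * u s)) t) has_real_derivative
        (X s - \<omega>^2 * u s + (\<omega>^4 + \<omega>^2) * V1 s + p s * u s
          - res (\<lambda>r. p' r * u r) s - \<omega>^2 * res (\<lambda>r. p r * u r) s)
        - k s * (res X s - \<omega>^2 * V1 s + (\<omega>^4 + \<omega>^2) * V2 s + res (\<lambda>s. p s * u s) s
          - res (res (\<lambda>s. p' s * u s)) s - \<omega>^2 * res (res (\<lambda>s. p s * u s)) s)) (at s within {0..})"
      by (rule DERIV_cong) (simp add: algebra_simps)
  qed (simp_all add: res_0 V1_def V2_def)
  finally show ?thesis .
qed

definition principal :: "real \<Rightarrow> real" where
  "principal t = u t - 2 * k t * V1 t + ((k t)^2 + \<omega>^2 + p' t / 2) * V2 t"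

definition remainder :: "real \<Rightarrow> real" where
  "remainder t = res (\<lambda>s. p' s * V1 s) t + ((p t)^2 / 4 + p' t / 2) * V2 t + res (res (\<lambda>s. p' s * u s)) t
    - \<omega>^2 * res (\<lambda>s. p' s * V2 s) t - \<omega>^2 * res (res (\<lambda>s. p' s * V1 s)) t"

lemma Afun_mult_y2fun:
  assumes t: "0 \<le> t"
  shows "Afun p t * y2fun \<omega> f t = principal t - remainder t"
proof -
  have res_pu: "res (\<lambda>s. p s * u s) s = p s * V1 s - res (\<lambda>s. p' s * V1 s) s" if "0 \<le> s" for s
    using p_mult_res[OF u_cont that] res_add[OF _ _ that, of "\<lambda>s. p' s * V1 s" "\<lambda>s. p s * u s"]
    by (simp add: V1_def continuous_intros)
  have res_pV1: "res (\<lambda>s. p s * V1 s) t = p t * V2 t - res (\<lambda>s. p' s * V2 s) t"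
    using p_mult_res[OF V1_cont t] res_add[OF _ _ t, of "\<lambda>s. p' s * V2 s" "\<lambda>s. p s * V1 s"]
    by (simp add: V2_def continuous_intros)
  have "res (res (\<lambda>s. p s * u s)) t = res (\<lambda>s. p s * V1 s - res (\<lambda>s. p' s * V1 s) s) t"
    by (rule res_cong[OF res_pu t])
  also have "\<dots> = p t * V2 t - res (\<lambda>s. p' s * V2 s) t - res (res (\<lambda>s. p' s * V1 s)) t"
    by (subst res_diff[OF _ _ t]) (intro continuous_intros, intro continuous_intros, simp add: res_pV1)
  finally have res_res_pu: "res (res (\<lambda>s. p s * u s)) t
      = p t * V2 t - res (\<lambda>s. p' s * V2 s) t - res (res (\<lambda>s. p' s * V1 s)) t" .
  show ?thesis
    unfolding Afun_mult_y2fun_expansion[OF t] res_X[OF t] res_pu[OF t] res_res_pu principal_def remainder_def k_def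
    by (simp add: algebra_simps power2_eq_square power4_eq_xxxx)
qed

lemma cont_L1_remainder:
  assumes "bounded (u ` {0..})"
  shows "cont_L1 remainder"
proof -
  have V1_bdd: "bounded (V1 ` {0..})" and V2_bdd: "bounded (V2 ` {0..})"
    using res_bounded[OF u_cont assms] res_bounded[OF V1_cont] unfolding V1_def V2_def by blast+
  have p'_mult: "cont_L1 (\<lambda>s. p' s * b s)" if "continuous_on {0..} b" "bounded (b ` {0..})" for b
    using cont_L1_mult_bounded[OF cont_L1_p' that] by (simp add: mult.commute)
  have coeff: "cont_L1 (\<lambda>t. (p t)^2 / 4 + p' t / 2)"
    using cont_L1_add[OF cont_L1_cmult[OF cont_L1_p_sq, of "1/4"] cont_L1_cmult[OF cont_L1_p', of "1/2"]]
    by simp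
  have "cont_L1 (\<lambda>t. res (\<lambda>s. p' s * V1 s) t + ((p t)^2 / 4 + p' t / 2) * V2 t + res (res (\<lambda>s. p' s * u s)) t
      - \<omega>^2 * res (\<lambda>s. p' s * V2 s) t - \<omega>^2 * res (res (\<lambda>s. p' s * V1 s)) t)"
    using assms V1_bdd V2_bdd
    by (intro cont_L1_add cont_L1_diff cont_L1_cmult res_cont_L1 p'_mult continuous_intros
        cont_L1_mult_bounded[OF coeff, of V2, unfolded mult.commute[of "V2 _"]])
  then show ?thesis
    by (simp add: remainder_def[abs_def])
qed

definition cos_primitive :: "real \<Rightarrow> real" where
  "cos_primitive t = cos (\<omega> * t) * (V1 t - k t * V2 t) + \<omega> * sin (\<omega> * t) * V2 t"

definition sin_primitive :: "real \<Rightarrow> real" where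
  "sin_primitive t = sin (\<omega> * t) * (V1 t - k t * V2 t) - \<omega> * cos (\<omega> * t) * V2 t"

lemma V1_minus_k_V2_deriv:
  "0 \<le> t \<Longrightarrow> ((\<lambda>t. V1 t - k t * V2 t) has_real_derivative
    (u t - k t * V1 t) - (- p' t / 2 * V2 t + (V1 t - k t * V2 t) * k t)) (at t within {0..})"
  by (intro DERIV_diff DERIV_mult V1_deriv V2_deriv k_deriv)

lemma cos_primitive_deriv:
  assumes t: "0 \<le> t"
  shows "(cos_primitive has_real_derivative cos (\<omega> * t) * principal t) (at t within {0..})"
proof -
  have "((\<lambda>t. cos (\<omega> * t)) has_real_derivative - \<omega> * sin (\<omega> * t)) (at t within {0..})"
    "((\<lambda>t. sin (\<omega> * t)) has_real_derivative \<omega> * cos (\<omega> * t)) (at t within {0..})"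
    by (rule derivative_eq_intros refl | simp)+
  from DERIV_add[OF DERIV_mult[OF this(1) V1_minus_k_V2_deriv[OF t]] DERIV_mult[OF DERIV_cmult[OF this(2), of \<omega>] V2_deriv[OF t]]]
  show ?thesis
    unfolding cos_primitive_def[abs_def]
    by (rule DERIV_cong) (simp add: principal_def algebra_simps power2_eq_square)
qed

lemma sin_primitive_deriv:
  assumes t: "0 \<le> t"
  shows "(sin_primitive has_real_derivative sin (\<omega> * t) * principal t) (at t within {0..})"
proof -
  have "((\<lambda>t. sin (\<omega> * t)) has_real_derivative \<omega> * cos (\<omega> * t)) (at t within {0..})"
    "((\<lambda>t. cos (\<omega> * t)) has_real_derivative - \<omega> * sin (\<omega> * t)) (at t within {0..})"
    by (rule derivative_eq_intros refl | simp)+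
  from DERIV_diff[OF DERIV_mult[OF this(1) V1_minus_k_V2_deriv[OF t]] DERIV_mult[OF DERIV_cmult[OF this(2), of \<omega>] V2_deriv[OF t]]]
  show ?thesis
    unfolding sin_primitive_def[abs_def]
    by (rule DERIV_cong) (simp add: principal_def algebra_simps power2_eq_square)
qed

lemma V1_minus_k_V2_asymptotic:
  assumes V1: "((\<lambda>t. V1 t - trig_poly \<omega> a1 b1 t) \<longlongrightarrow> 0) at_top"
    and V2: "((\<lambda>t. V2 t - trig_poly \<omega> a2 b2 t) \<longlongrightarrow> 0) at_top"
    and a1: "\<omega>^2 * a2 + \<omega> * b2 = a1" and b1: "\<omega>^2 * b2 - \<omega> * a2 = b1"
  shows "((\<lambda>t. V1 t - k t * V2 t - trig_poly \<omega> (\<omega> * b2) (- \<omega> * a2) t) \<longlongrightarrow> 0) at_top"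
proof -
  have trig: "trig_poly \<omega> a1 b1 t - \<omega>^2 * trig_poly \<omega> a2 b2 t = trig_poly \<omega> (\<omega> * b2) (- \<omega> * a2) t" for t
    unfolding trig_poly_def a1[symmetric] b1[symmetric] by (simp add: algebra_simps)
  have "((\<lambda>t. k t - \<omega>^2) \<longlongrightarrow> 0) at_top"
    by (rule LIM_zero[OF k_tendsto])
  then have "((\<lambda>t. trig_poly \<omega> a2 b2 t * (k t - \<omega>^2)) \<longlongrightarrow> 0) at_top"
    by (intro tendsto_zero_mult_Bfun Bfun_trig_poly)
  moreover have "((\<lambda>t. k t * (V2 t - trig_poly \<omega> a2 b2 t)) \<longlongrightarrow> \<omega>^2 * 0) at_top"
    by (intro tendsto_mult k_tendsto V2)
  ultimately have "((\<lambda>t. (V1 t - trig_poly \<omega> a1 b1 t) - k t * (V2 t - trig_poly \<omega> a2 b2 t)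
      - trig_poly \<omega> a2 b2 t * (k t - \<omega>^2)) \<longlongrightarrow> 0 - \<omega>^2 * 0 - 0) at_top"
    by (intro tendsto_diff V1)
  then show ?thesis
    unfolding trig[symmetric] by (simp add: algebra_simps)
qed

lemma cos_primitive_tendsto:
  assumes V1: "((\<lambda>t. V1 t - trig_poly \<omega> a1 b1 t) \<longlongrightarrow> 0) at_top"
    and V2: "((\<lambda>t. V2 t - trig_poly \<omega> a2 b2 t) \<longlongrightarrow> 0) at_top"
    and "\<omega>^2 * a2 + \<omega> * b2 = a1" "\<omega>^2 * b2 - \<omega> * a2 = b1"
  shows "(cos_primitive \<longlongrightarrow> \<omega> * b2) at_top"
proof -
  define E where "E t = V1 t - k t * V2 t - trig_poly \<omega> (\<omega> * b2) (- \<omega> * a2) t" for t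
  have "cos_primitive t = cos (\<omega> * t) * E t + \<omega> * sin (\<omega> * t) * (V2 t - trig_poly \<omega> a2 b2 t)
      + (cos (\<omega> * t) * trig_poly \<omega> (\<omega> * b2) (- \<omega> * a2) t + \<omega> * sin (\<omega> * t) * trig_poly \<omega> a2 b2 t)" for t
    by (simp add: cos_primitive_def E_def algebra_simps)
  then have eq: "cos_primitive t = cos (\<omega> * t) * E t + \<omega> * sin (\<omega> * t) * (V2 t - trig_poly \<omega> a2 b2 t)
      + \<omega> * b2" for t
    using cos_mult_trig_poly_identity by simp
  have "((\<lambda>t. cos (\<omega> * t) * E t + \<omega> * sin (\<omega> * t) * (V2 t - trig_poly \<omega> a2 b2 t) + \<omega> * b2)
      \<longlongrightarrow> 0 + 0 + \<omega> * b2) at_top"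
    using V1_minus_k_V2_asymptotic[OF assms] unfolding E_def[symmetric]
    by (intro tendsto_add tendsto_const tendsto_zero_mult_Bfun V2 Bfun_cos_sin Bfun_cos_sin[of 1, simplified])
  then show ?thesis
    by (simp add: eq[abs_def])
qed

lemma sin_primitive_tendsto:
  assumes V1: "((\<lambda>t. V1 t - trig_poly \<omega> a1 b1 t) \<longlongrightarrow> 0) at_top"
    and V2: "((\<lambda>t. V2 t - trig_poly \<omega> a2 b2 t) \<longlongrightarrow> 0) at_top"
    and "\<omega>^2 * a2 + \<omega> * b2 = a1" "\<omega>^2 * b2 - \<omega> * a2 = b1"
  shows "(sin_primitive \<longlongrightarrow> - \<omega> * a2) at_top"
proof -
  define E where "E t = V1 t - k t * V2 t - trig_poly \<omega> (\<omega> * b2) (- \<omega> * a2) t" for t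
  have "sin_primitive t = sin (\<omega> * t) * E t - \<omega> * cos (\<omega> * t) * (V2 t - trig_poly \<omega> a2 b2 t)
      + (sin (\<omega> * t) * trig_poly \<omega> (\<omega> * b2) (- \<omega> * a2) t - \<omega> * cos (\<omega> * t) * trig_poly \<omega> a2 b2 t)" for t
    by (simp add: sin_primitive_def E_def algebra_simps)
  then have eq: "sin_primitive t = sin (\<omega> * t) * E t - \<omega> * cos (\<omega> * t) * (V2 t - trig_poly \<omega> a2 b2 t)
      - \<omega> * a2" for t
    using sin_mult_trig_poly_identity by simp
  have "((\<lambda>t. sin (\<omega> * t) * E t - \<omega> * cos (\<omega> * t) * (V2 t - trig_poly \<omega> a2 b2 t) - \<omega> * a2)
      \<longlongrightarrow> 0 - 0 - \<omega> * a2) at_top"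
    using V1_minus_k_V2_asymptotic[OF assms] unfolding E_def[symmetric]
    by (intro tendsto_diff tendsto_const tendsto_zero_mult_Bfun V2 Bfun_cos_sin Bfun_cos_sin[of 1, simplified])
  then show ?thesis
    by (simp add: eq[abs_def])
qed

lemma integrals_converge:
  assumes u_asym: "((\<lambda>t. u t - trig_poly \<omega> c1 c2 t) \<longlongrightarrow> 0) at_top"
  shows "(\<exists>L. ((\<lambda>T. integral {0..T} (\<lambda>t. Afun p t * sin (\<omega> * t) * y2fun \<omega> f t)) \<longlongrightarrow> L) at_top)
       \<and> (\<exists>L. ((\<lambda>T. integral {0..T} (\<lambda>t. Afun p t * cos (\<omega> * t) * y2fun \<omega> f t)) \<longlongrightarrow> L) at_top)"
proof -
  have "\<forall>\<^sub>F t in at_top. \<bar>u t\<bar> \<le> \<bar>c1\<bar> + \<bar>c2\<bar> + 1"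
    using tendstoD[OF u_asym zero_less_one]
  proof eventually_elim
    case (elim t)
    then show ?case
      using abs_trig_poly_le[of \<omega> c1 c2 t] by (simp add: dist_real_def)
  qed
  then have "cont_L1 remainder"
    by (intro cont_L1_remainder bounded_Ici_if_eventually_bounded u_cont)
  then have L1: "cont_L1 (\<lambda>t. sin (\<omega> * t) * remainder t)" "cont_L1 (\<lambda>t. cos (\<omega> * t) * remainder t)"
    by (auto intro!: cont_L1_mult_bounded continuous_intros exI[of _ 1] simp: bounded_iff)
  obtain a1 b1 where V1: "((\<lambda>t. V1 t - trig_poly \<omega> a1 b1 t) \<longlongrightarrow> 0) at_top"
    and "\<omega>^2 * a1 + \<omega> * b1 = c1" "\<omega>^2 * b1 - \<omega> * a1 = c2"
    using res_trig_poly_asymptotic[OF u_cont u_asym] unfolding V1_def by blast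
  obtain a2 b2 where V2: "((\<lambda>t. V2 t - trig_poly \<omega> a2 b2 t) \<longlongrightarrow> 0) at_top"
    and a1: "\<omega>^2 * a2 + \<omega> * b2 = a1" and b1: "\<omega>^2 * b2 - \<omega> * a2 = b1"
    using res_trig_poly_asymptotic[OF V1_cont V1] unfolding V2_def by blast
  note primitives = cos_primitive_tendsto[OF V1 V2 a1 b1] sin_primitive_tendsto[OF V1 V2 a1 b1]
  have y2_eq: "Afun p t * c * y2fun \<omega> f t = c * principal t - c * remainder t" if "0 \<le> t" for c t
  proof -
    have "Afun p t * c * y2fun \<omega> f t = c * (Afun p t * y2fun \<omega> f t)"
      by (simp add: ac_simps)
    then show ?thesis
      by (simp add: Afun_mult_y2fun[OF that] right_diff_distrib)
  qed
  show ?thesis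
    using integral_tendsto_if_deriv_minus_L1[OF sin_primitive_deriv primitives(2) L1(1) y2_eq]
      integral_tendsto_if_deriv_minus_L1[OF cos_primitive_deriv primitives(1) L1(2) y2_eq]
    by blast
qed

end

theorem mainTheorem20:
  fixes \<omega> :: real and p p' f x x' :: "real \<Rightarrow> real"
  assumes omega_pos: "\<omega> > 0"
    and p_deriv: "\<And>t. t \<ge> 0 \<Longrightarrow> (p has_real_derivative p' t) (at t within {0..})"
    and p'_cont: "continuous_on {0..} p'"
    and p_pos: "\<And>t. t \<ge> 0 \<Longrightarrow> p t > 0"
    and p'_neg: "\<And>t. t \<ge> 0 \<Longrightarrow> p' t < 0"
    and p_int_div: "filterlim (\<lambda>T. integral {0..T} p) at_top at_top"
    and p_sq_int: "(\<lambda>t. (p t)^2) integrable_on {0..}"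
    and f_loc: "\<And>T. T \<ge> 0 \<Longrightarrow> f absolutely_integrable_on {0..T}"
    and x_deriv: "\<And>t. t \<ge> 0 \<Longrightarrow> (x has_real_derivative x' t) (at t within {0..})"
    and x'_eq: "\<And>t. t \<ge> 0 \<Longrightarrow>
        ((\<lambda>s. f s - p s * x' s - \<omega>^2 * x s) has_integral x' t) {0..t}"
    and x0: "x 0 = 0"
    and p'_lim: "(p' \<longlongrightarrow> 0) at_top"
    and y2_small: "y2fun \<omega> f \<in> o[at_top](\<lambda>t. 1 / Afun p t)"
    and x_asym: "\<exists>c1 c2. (\<lambda>t. x t - (c1 * cos (\<omega> * t) + c2 * sin (\<omega> * t)) / Afun p t)
                    \<in> o[at_top](\<lambda>t. 1 / Afun p t)"
  shows "(\<exists>L. ((\<lambda>T. integral {0..T} (\<lambda>t. Afun p t * sin (\<omega> * t) * y2fun \<omega> f t))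
              \<longlongrightarrow> L) at_top)
       \<and> (\<exists>L. ((\<lambda>T. integral {0..T} (\<lambda>t. Afun p t * cos (\<omega> * t) * y2fun \<omega> f t))
              \<longlongrightarrow> L) at_top)"
proof -
  interpret osc: damped_oscillator \<omega> p p' f x x'
    using omega_pos p_deriv p'_cont p_pos p'_neg p_sq_int x_deriv x'_eq x0 by unfold_locales auto
  obtain c1 c2 where "(\<lambda>t. x t - (c1 * cos (\<omega> * t) + c2 * sin (\<omega> * t)) / Afun p t)
      \<in> o[at_top](\<lambda>t. 1 / Afun p t)"
    using x_asym by blast
  from tendsto_zero_if_smallo_inverse[OF this osc.Afun_pos]
  have "((\<lambda>t. osc.u t - trig_poly \<omega> c1 c2 t) \<longlongrightarrow> 0) at_top"
    by (simp add: osc.u_def trig_poly_def)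
  then show ?thesis
    by (rule osc.integrals_converge)
qed

end
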